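(* Let $n\ge -1$ be an odd integer, and let $q_1,q_2\in\Gamma_n$ and paths $a,b$ of positive length satisfy $q_1a=bq_2$ (so $q_1$ and $q_2$ occur at different positions in the path $w:=q_1a=bq_2$, $q_1$ as a suffix and $q_2$ as a prefix). If $a\notin I$ and $b\notin I$, then there exist $(n+1)$-ambiguities $p_1,p_2\le w$ (occurring in $w$) such that $\sigma_n(p_1)=q_1$ and $\pi_n(p_2)=q_2$ (as occurrences in $w$).
   Context: Let $\Bbbk$ be a field, $Q=(Q_0,Q_1,s,t)$ a finite quiver, and $A=\Bbbk Q/I$ a finite-dimensional monomial algebra, i.e. $I$ is an ideal generated by paths of length at least $2$. Paths are written from right to left: a path is $p=\alpha_n\cdots\alpha_1$ with arrows $\alpha_i$ and $t(\alpha_i)=s(\alpha_{i+1})$; vertices are the paths of length $0$ (trivial paths, also denoted $1$); $qp$ denotes concatenation when $t(p)=s(q)$. Let $\mathcal B$ be the set of paths not lying in $I$. If $p=bqa$ for paths $a,b,q$, then $q$ is a divisor of $p$; we write $q\le p$ to mean that $q$ is a divisor of $p$ at a fixed position (an occurrence), and then $\mathrm{pre}_p(q):=a$, $\mathrm{suf}_p(q):=b$. If $b$ is trivial, $q$ is a suffix; if $a$ is trivial, $q$ is a prefix; proper means $q\neq p$, written $q\lneq p$. For $n\ge -1$, a left $n$-ambiguity is a path $p$ with a decomposition $p=u_{-1}u_0u_1\cdots u_n$ such that $u_{-1}\in Q_0$, $u_0\in Q_1$, $u_i\in\mathcal B$ for all $i$, and for every $0\le i\le n-1$, $u_iu_{i+1}\in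 I$ while no proper suffix of $u_iu_{i+1}$ lies in $I$ (one writes $p=u_0\cdots u_n$). A right $n$-ambiguity is a path with a decomposition $p=v_n\cdots v_0v_{-1}$ with $v_{-1}\in Q_0$, $v_0\in Q_1$, $v_i\in\mathcal B$, and for $0\le i\le n-1$, $v_{i+1}v_i\in I$ while no proper prefix of $v_{i+1}v_i$ lies in $I$. A path is a left $n$-ambiguity iff it is a right $n$-ambiguity; such paths are called $n$-ambiguities, and $\Gamma_n$ denotes their set. Both decompositions of an $n$-ambiguity are unique. For $p\in\Gamma_n$ with left decomposition $u_0\cdots u_n$ and right decomposition $v_n\cdots v_0$, and $-1\le m\le n$, set $\sigma_m(p):=u_0\cdots u_m$ (a suffix of $p$ which is an $m$-ambiguity) and $\pi_m(p):=v_m\cdots v_0$ (a prefix of $p$ which is an $m$-ambiguity). *)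

theory Defs
  imports Main
begin

(* A path is a pair (es, v):
   es = the list of arrows in WRITTEN order (right-to-left composition, so
   the path alpha_n ... alpha_1 is the list [alpha_n, ..., alpha_1]; the head
   is traversed last), and v = the source vertex s(p). *)

type_synonym ('v,'e) qpath = "'e list \<times> 'v"

definition triv :: "'v \<Rightarrow> ('v,'e) qpath" where
  "triv v = ([], v)"

definition psrc :: "('v,'e) qpath \<Rightarrow> 'v" where
  "psrc p = snd p"

definition plen :: "('v,'e) qpath \<Rightarrow> nat" where
  "plen p = length (fst p)"

(* concatenation  q p  (p first, then q); meaningful when ptgt p = psrc q *)
definition pcomp :: "('v,'e) qpath \<Rightarrow> ('v,'e) qpath \<Rightarrow> ('v,'e) qpath" where
  "pcomp q p = (fst q @ fst p, snd p)"

fun pcomp_list :: "('v,'e) qpath list \<Rightarrow> ('v,'e) qpath" where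
  "pcomp_list [] = undefined"
| "pcomp_list [x] = x"
| "pcomp_list (x # xs) = pcomp x (pcomp_list xs)"

locale quiver_monomial =
  fixes Q0 :: "'v set" and Q1 :: "'e set" and s :: "'e \<Rightarrow> 'v" and t :: "'e \<Rightarrow> 'v"
    and R :: "('v,'e) qpath set"   (* generating set of paths of the ideal I *)
begin

definition ptgt :: "('v,'e) qpath \<Rightarrow> 'v" where
  "ptgt p = (if fst p = [] then snd p else t (hd (fst p)))"

definition is_path :: "('v,'e) qpath \<Rightarrow> bool" where
  "is_path p \<longleftrightarrow> snd p \<in> Q0 \<and> set (fst p) \<subseteq> Q1
     \<and> (\<forall>i. Suc i < length (fst p) \<longrightarrow> s (fst p ! i) = t (fst p ! Suc i))
     \<and> (fst p \<noteq> [] \<longrightarrow> s (last (fst p)) = snd p)"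

(* q occurs in w at the position w = x q y  (x = suf_w(q), y = pre_w(q)) *)
definition occ :: "('v,'e) qpath \<Rightarrow> ('v,'e) qpath \<Rightarrow> ('v,'e) qpath \<Rightarrow> ('v,'e) qpath \<Rightarrow> bool" where
  "occ w q x y \<longleftrightarrow> is_path x \<and> is_path q \<and> is_path y \<and> ptgt y = psrc q \<and> ptgt q = psrc x
     \<and> w = pcomp x (pcomp q y)"

(* a path lies in the monomial ideal I generated by the paths in R iff it has a divisor in R *)
definition inI :: "('v,'e) qpath \<Rightarrow> bool" where
  "inI p \<longleftrightarrow> (\<exists>r x y. r \<in> R \<and> occ p r x y)"

definition inB :: "('v,'e) qpath \<Rightarrow> bool" where
  "inB p \<longleftrightarrow> is_path p \<and> \<not> inI p"

definition is_suffix :: "('v,'e) qpath \<Rightarrow> ('v,'e) qpath \<Rightarrow> bool" where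
  "is_suffix q p \<longleftrightarrow> (\<exists>y. occ p q (triv (ptgt p)) y)"

definition is_prefix :: "('v,'e) qpath \<Rightarrow> ('v,'e) qpath \<Rightarrow> bool" where
  "is_prefix q p \<longleftrightarrow> (\<exists>x. occ p q x (triv (psrc p)))"

(* a chain us = [u_0', u_1', ...] written left to right, composable as u_0' u_1' ... *)
definition chain :: "('v,'e) qpath list \<Rightarrow> bool" where
  "chain us \<longleftrightarrow> us \<noteq> [] \<and> (\<forall>u\<in>set us. is_path u)
     \<and> (\<forall>i. Suc i < length us \<longrightarrow> ptgt (us ! Suc i) = psrc (us ! i))"

(* left n-ambiguity decomposition: us ! 0 = u_{-1}, us ! (k+1) = u_k, p = u_{-1} u_0 ... u_n *)
definition left_decomp :: "int \<Rightarrow> ('v,'e) qpath \<Rightarrow> ('v,'e) qpath list \<Rightarrow> bool" where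
  "left_decomp n p us \<longleftrightarrow> n \<ge> -1 \<and> length us = nat (n + 2) \<and> chain us \<and> p = pcomp_list us
     \<and> fst (us ! 0) = [] \<and> snd (us ! 0) \<in> Q0
     \<and> (n \<ge> 0 \<longrightarrow> plen (us ! 1) = 1)
     \<and> (\<forall>u\<in>set us. inB u)
     \<and> (\<forall>j. 1 \<le> j \<and> j + 1 < length us \<longrightarrow>
           inI (pcomp (us ! j) (us ! (j+1)))
         \<and> (\<forall>q. is_suffix q (pcomp (us ! j) (us ! (j+1))) \<and> q \<noteq> pcomp (us ! j) (us ! (j+1))
                \<longrightarrow> \<not> inI q))"

(* right n-ambiguity decomposition: vs ! 0 = v_{-1}, vs ! (k+1) = v_k, p = v_n ... v_0 v_{-1} *)
definition right_decomp :: "int \<Rightarrow> ('v,'e) qpath \<Rightarrow> ('v,'e) qpath list \<Rightarrow> bool" where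
  "right_decomp n p vs \<longleftrightarrow> n \<ge> -1 \<and> length vs = nat (n + 2) \<and> chain (rev vs) \<and> p = pcomp_list (rev vs)
     \<and> fst (vs ! 0) = [] \<and> snd (vs ! 0) \<in> Q0
     \<and> (n \<ge> 0 \<longrightarrow> plen (vs ! 1) = 1)
     \<and> (\<forall>v\<in>set vs. inB v)
     \<and> (\<forall>j. 1 \<le> j \<and> j + 1 < length vs \<longrightarrow>
           inI (pcomp (vs ! (j+1)) (vs ! j))
         \<and> (\<forall>q. is_prefix q (pcomp (vs ! (j+1)) (vs ! j)) \<and> q \<noteq> pcomp (vs ! (j+1)) (vs ! j)
                \<longrightarrow> \<not> inI q))"

definition left_amb :: "int \<Rightarrow> ('v,'e) qpath \<Rightarrow> bool" where
  "left_amb n p \<longleftrightarrow> (\<exists>us. left_decomp n p us)"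

definition right_amb :: "int \<Rightarrow> ('v,'e) qpath \<Rightarrow> bool" where
  "right_amb n p \<longleftrightarrow> (\<exists>vs. right_decomp n p vs)"

definition Gamma :: "int \<Rightarrow> ('v,'e) qpath set" where
  "Gamma n = {p. left_amb n p \<and> right_amb n p}"

(* sigma_m(p) = u_{-1} u_0 ... u_m for the (unique) left decomposition of p in Gamma_n *)
definition sigma :: "int \<Rightarrow> int \<Rightarrow> ('v,'e) qpath \<Rightarrow> ('v,'e) qpath" where
  "sigma n m p = pcomp_list (take (nat (m + 2)) (THE us. left_decomp n p us))"

(* pi_m(p) = v_m ... v_0 v_{-1} for the (unique) right decomposition of p in Gamma_n *)
definition pi :: "int \<Rightarrow> int \<Rightarrow> ('v,'e) qpath \<Rightarrow> ('v,'e) qpath" where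
  "pi n m p = pcomp_list (rev (take (nat (m + 2)) (THE vs. right_decomp n p vs)))"

end

(* standing assumptions: finite quiver, I generated by paths of length >= 2,
   A = kQ/I finite-dimensional (finitely many paths outside I) *)
definition finite_monomial :: "'v set \<Rightarrow> 'e set \<Rightarrow> ('e \<Rightarrow> 'v) \<Rightarrow> ('e \<Rightarrow> 'v) \<Rightarrow> ('v,'e) qpath set \<Rightarrow> bool" where
  "finite_monomial Q0 Q1 s t R \<longleftrightarrow> finite Q0 \<and> finite Q1
     \<and> (\<forall>e\<in>Q1. s e \<in> Q0 \<and> t e \<in> Q0)
     \<and> (\<forall>r\<in>R. quiver_monomial.is_path Q0 Q1 s t r \<and> plen r \<ge> 2)
     \<and> finite {p. quiver_monomial.inB Q0 Q1 s t R p}"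

end

(* Positions 0, ..., plen w cut a path w into subpaths, and the monomial ideal I induces the
   relation J i j = "the subpath between positions i and j lies in I". It is monotone under
   enlarging the segment and fails on segments of length at most 1. The left decomposition of an
   n-ambiguity inside w is a chain of cut positions whose consecutive pieces avoid I while every
   product of two consecutive pieces lies in I with no proper suffix in I; the right decomposition
   is the same from the other end. Such chains are unique, and a greedy construction turns a left
   chain into a right one; the reflection x |-> N - x exchanges the two sides.

   For q1 = w[0, m1] and q2 = w[m2, N] with 0 < m2 the left chains interlace,
   c1 (2j + 1) <= c2 (2j), because each cut of q1 is the least position closing a relation with
   the cut two steps before it. For odd n the chains have even length n + 1, so c1 n <= c2 (n - 1),
   and the relation formed by the last two pieces of q2 yields one from c1 n to the end of w. Its
   least end point e lies beyond m1 because a is not in I, and cutting at e extends q1 to the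
   (n + 1)-ambiguity w[0, e] with sigma_n = q1. The statement for q2 is the mirror image. *)

theory Submission
  imports Defs
begin

lemma lift_Suc_mono_le_upto:
  fixes f :: "nat \<Rightarrow> 'a::order"
  assumes "\<And>k. k < m \<Longrightarrow> f k \<le> f (Suc k)" "a \<le> b" "b \<le> m"
  shows "f a \<le> f b"
  using assms(2,3)
proof (induction b rule: dec_induct)
  case (step k)
  then show ?case using assms(1)[of k] order_trans by simp
qed simp

lemma lift_Suc_antimono_le_upto:
  fixes f :: "nat \<Rightarrow> 'a::order"
  assumes "\<And>k. k < m \<Longrightarrow> f (Suc k) \<le> f k" "a \<le> b" "b \<le> m"
  shows "f b \<le> f a"
  using assms(2,3)
proof (induction b rule: dec_induct)
  case (step k)
  then show ?case using assms(1)[of k] order_trans by simp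
qed simp

lemma all_interior_Suc_conv:
  "(\<forall>j. 1 \<le> j \<and> j + 1 < Suc m \<longrightarrow> P j) \<longleftrightarrow> (\<forall>k. Suc (Suc k) \<le> m \<longrightarrow> P (Suc k))"
proof (intro iffI allI impI)
  fix j assume "\<forall>k. Suc (Suc k) \<le> m \<longrightarrow> P (Suc k)" and "1 \<le> j \<and> j + 1 < Suc m"
  then show "P j" by (cases j) auto
qed simp

section \<open>Chains of cut positions\<close>

definition segment_ideal :: "(nat \<Rightarrow> nat \<Rightarrow> bool) \<Rightarrow> nat \<Rightarrow> nat \<Rightarrow> bool" where
  "segment_ideal J lo hi \<longleftrightarrow>
     (\<forall>i' i j j'. lo \<le> i' \<longrightarrow> i' \<le> i \<longrightarrow> i \<le> j \<longrightarrow> j \<le> j' \<longrightarrow> j' \<le> hi \<longrightarrow> J i j \<longrightarrow> J i' j')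
   \<and> (\<forall>i j. J i j \<longrightarrow> Suc i < j)"

(* c k is the cut between u_(k-1) and u_k of a left decomposition u_(-1) u_0 ... u_(m-1) of the
   segment [lo, hi]; a right chain lists the cuts of a right decomposition from hi downwards. *)
definition left_chain :: "(nat \<Rightarrow> nat \<Rightarrow> bool) \<Rightarrow> nat \<Rightarrow> nat \<Rightarrow> nat \<Rightarrow> (nat \<Rightarrow> nat) \<Rightarrow> bool" where
  "left_chain J m lo hi c \<longleftrightarrow> c 0 = lo \<and> c m = hi \<and> (0 < m \<longrightarrow> c 1 = Suc lo)
     \<and> (\<forall>k<m. c k \<le> c (Suc k) \<and> \<not> J (c k) (c (Suc k)))
     \<and> (\<forall>k. Suc (Suc k) \<le> m \<longrightarrow> J (c k) (c (Suc (Suc k)))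
            \<and> (\<forall>x. c k \<le> x \<and> x < c (Suc (Suc k)) \<longrightarrow> \<not> J (c k) x))"

definition right_chain :: "(nat \<Rightarrow> nat \<Rightarrow> bool) \<Rightarrow> nat \<Rightarrow> nat \<Rightarrow> nat \<Rightarrow> (nat \<Rightarrow> nat) \<Rightarrow> bool" where
  "right_chain J m lo hi d \<longleftrightarrow> d 0 = hi \<and> d m = lo \<and> (0 < m \<longrightarrow> Suc (d 1) = hi)
     \<and> (\<forall>k<m. d (Suc k) \<le> d k \<and> \<not> J (d (Suc k)) (d k))
     \<and> (\<forall>k. Suc (Suc k) \<le> m \<longrightarrow> J (d (Suc (Suc k))) (d k)
            \<and> (\<forall>x. d (Suc (Suc k)) < x \<and> x \<le> d k \<longrightarrow> \<not> J x (d k)))"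

lemma left_chainD:
  assumes "left_chain J m lo hi c"
  shows left_chain_0: "c 0 = lo" and left_chain_m: "c m = hi"
    and left_chain_1: "0 < m \<Longrightarrow> c 1 = Suc lo"
    and left_chain_le_Suc: "k < m \<Longrightarrow> c k \<le> c (Suc k)"
    and left_chain_notJ: "k < m \<Longrightarrow> \<not> J (c k) (c (Suc k))"
    and left_chain_J: "Suc (Suc k) \<le> m \<Longrightarrow> J (c k) (c (Suc (Suc k)))"
    and left_chain_J_minimal: "\<lbrakk>Suc (Suc k) \<le> m; c k \<le> x; x < c (Suc (Suc k))\<rbrakk> \<Longrightarrow> \<not> J (c k) x"
  using assms unfolding left_chain_def by blast+

lemma right_chainD:
  assumes "right_chain J m lo hi d"
  shows right_chain_0: "d 0 = hi" and right_chain_m: "d m = lo"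
    and right_chain_1: "0 < m \<Longrightarrow> Suc (d 1) = hi"
    and right_chain_Suc_le: "k < m \<Longrightarrow> d (Suc k) \<le> d k"
    and right_chain_notJ: "k < m \<Longrightarrow> \<not> J (d (Suc k)) (d k)"
    and right_chain_J: "Suc (Suc k) \<le> m \<Longrightarrow> J (d (Suc (Suc k))) (d k)"
    and right_chain_J_maximal: "\<lbrakk>Suc (Suc k) \<le> m; d (Suc (Suc k)) < x; x \<le> d k\<rbrakk> \<Longrightarrow> \<not> J x (d k)"
  using assms unfolding right_chain_def by blast+

lemma segment_idealD:
  assumes "segment_ideal J lo hi"
  shows segment_ideal_mono: "\<lbrakk>lo \<le> i'; i' \<le> i; i \<le> j; j \<le> j'; j' \<le> hi; J i j\<rbrakk> \<Longrightarrow> J i' j'"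
    and segment_ideal_long: "J i j \<Longrightarrow> Suc i < j"
  using assms unfolding segment_ideal_def by blast+

lemma left_chain_mono:
  assumes "left_chain J m lo hi c" "a \<le> b" "b \<le> m"
  shows "c a \<le> c b"
  using lift_Suc_mono_le_upto[of m c a b] left_chain_le_Suc[OF assms(1)] assms(2,3) by blast

lemma left_chain_bounds:
  assumes "left_chain J m lo hi c" "k \<le> m"
  shows "lo \<le> c k" "c k \<le> hi"
  using left_chain_mono[OF assms(1), of 0 k] left_chain_mono[OF assms(1), of k m] assms
  by (simp_all add: left_chainD)

lemma right_chain_antimono:
  assumes "right_chain J m lo hi d" "a \<le> b" "b \<le> m"
  shows "d b \<le> d a"
  using lift_Suc_antimono_le_upto[of m d a b] right_chain_Suc_le[OF assms(1)] assms(2,3) by blast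

lemma right_chain_bounds:
  assumes "right_chain J m lo hi d" "k \<le> m"
  shows "lo \<le> d k" "d k \<le> hi"
  using right_chain_antimono[OF assms(1), of 0 k] right_chain_antimono[OF assms(1), of k m] assms
  by (simp_all add: right_chainD)

lemma left_chain_unique:
  assumes c: "left_chain J m lo hi c" and c': "left_chain J m lo hi c'" and "k \<le> m"
  shows "c k = c' k"
  using \<open>k \<le> m\<close>
proof (induction k rule: less_induct)
  case (less k)
  consider "k = 0" | "k = 1" | i where "k = Suc (Suc i)" by (metis One_nat_def not0_implies_Suc)
  then show ?case
  proof cases
    case 3
    then have i: "Suc (Suc i) \<le> m" and "c i = c' i" using less by auto
    moreover have "c i \<le> c k" "c' i \<le> c' k"
      using left_chain_mono[OF c, of i k] left_chain_mono[OF c', of i k] less 3 by auto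
    ultimately show ?thesis
      using left_chain_J[OF c i] left_chain_J_minimal[OF c i] left_chain_J[OF c' i]
        left_chain_J_minimal[OF c' i] 3
      by (metis linorder_neqE_nat)
  qed (use left_chainD[OF c] left_chainD[OF c'] less in auto)
qed

lemma left_chain_strict:
  assumes J: "segment_ideal J lo hi" and c: "left_chain J m lo hi c" and "k < m"
  shows "c k < c (Suc k)"
proof (cases k)
  case 0
  then show ?thesis using left_chainD[OF c] \<open>k < m\<close> by simp
next
  case (Suc i)
  have "J (c i) (c (Suc k))" "\<not> J (c i) (c k)"
    using left_chain_J[OF c, of i] left_chain_notJ[OF c, of i] \<open>k < m\<close> Suc by auto
  moreover have "lo \<le> c i" "c i \<le> c (Suc k)" "c k \<le> hi"
    using left_chain_bounds[OF c] left_chain_mono[OF c, of i "Suc k"] \<open>k < m\<close> Suc by auto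
  ultimately show ?thesis using segment_ideal_mono[OF J, of "c i" "c i" "c (Suc k)" "c k"] by force
qed

definition max_start :: "(nat \<Rightarrow> nat \<Rightarrow> bool) \<Rightarrow> nat \<Rightarrow> nat" where
  "max_start J j = Max {x. x \<le> j \<and> J x j}"

lemma max_start:
  assumes "J x j" "x \<le> j"
  shows "J (max_start J j) j" "x \<le> max_start J j" "max_start J j \<le> j"
proof -
  have "finite {x. x \<le> j \<and> J x j}" "x \<in> {x. x \<le> j \<and> J x j}" using assms by auto
  then show "J (max_start J j) j" "x \<le> max_start J j" "max_start J j \<le> j"
    unfolding max_start_def using Max_in Max_ge by blast+
qed

lemma max_start_in_left_chain_gap:
  assumes J: "segment_ideal J lo hi" and c: "left_chain J m lo hi c" and i: "Suc (Suc i) \<le> m"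
    and y: "c (Suc (Suc i)) \<le> y" "y \<le> hi" "\<not> J (c (Suc i)) y"
  shows "J (max_start J y) y" "c i \<le> max_start J y" "max_start J y < c (Suc i)"
proof -
  have "lo \<le> c i" "c i \<le> c (Suc (Suc i))" "c i \<le> c (Suc i)" "lo \<le> c (Suc i)"
    using left_chain_bounds[OF c] left_chain_mono[OF c] i by auto
  moreover have "J (c i) (c (Suc (Suc i)))" using left_chain_J[OF c i] .
  ultimately have "J (c i) y" using segment_ideal_mono[OF J] y by (meson order_refl)
  then show ml: "J (max_start J y) y" "c i \<le> max_start J y"
    using max_start \<open>c i \<le> c (Suc (Suc i))\<close> y by (auto intro: order_trans)
  show "max_start J y < c (Suc i)"
  proof (rule ccontr)
    assume "\<not> max_start J y < c (Suc i)"
    then have "J (c (Suc i)) y"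
      using segment_ideal_mono[OF J _ _ _ order_refl y(2) ml(1)] \<open>lo \<le> c (Suc i)\<close>
        segment_ideal_long[OF J ml(1)] by simp
    then show False using y(3) by simp
  qed
qed

fun greedy_right_chain :: "(nat \<Rightarrow> nat \<Rightarrow> bool) \<Rightarrow> nat \<Rightarrow> nat \<Rightarrow> nat" where
  "greedy_right_chain J hi 0 = hi"
| "greedy_right_chain J hi (Suc 0) = hi - 1"
| "greedy_right_chain J hi (Suc (Suc k)) = max_start J (greedy_right_chain J hi k)"

lemma greedy_right_chain_interlaces:
  assumes J: "segment_ideal J lo hi" and c: "left_chain J m lo hi c" and "k \<le> m"
  defines "d \<equiv> greedy_right_chain J hi"
  shows "c (m - k) \<le> d k \<and> d k \<le> hi \<and> (0 < k \<longrightarrow> d k < c (Suc (m - k)))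
    \<and> (k < m \<longrightarrow> \<not> J (c (m - Suc k)) (d k))"
  using \<open>k \<le> m\<close>
proof (induction k rule: less_induct)
  case (less k)
  have cm: "c m = hi" using left_chain_m[OF c] .
  consider "k = 0" | "k = 1" | k' where "k = Suc (Suc k')" by (metis One_nat_def not0_implies_Suc)
  then show ?case
  proof cases
    case 1
    have "\<not> J (c (m - 1)) (c m)" if "0 < m"
      using left_chain_notJ[OF c, of "m - 1"] that by simp
    then show ?thesis using 1 cm by (simp add: d_def)
  next
    case 2
    have "c (m - 1) < hi" using left_chain_strict[OF J c, of "m - 1"] cm 2 less by simp
    moreover have "\<not> J (c (m - 2)) (hi - 1)" if "1 < m"
    proof -
      have "c (m - 2) \<le> hi - 1"
        using left_chain_mono[OF c, of "m - 2" "m - 1"] \<open>c (m - 1) < hi\<close> by linarith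
      then show ?thesis
        using left_chain_J_minimal[OF c, of "m - 2" "hi - 1"] that cm \<open>c (m - 1) < hi\<close>
        by (simp add: Suc_diff_Suc numeral_2_eq_2)
    qed
    ultimately show ?thesis using 2 less cm by (auto simp: d_def numeral_2_eq_2)
  next
    case 3
    define i where "i = m - k"
    have i: "m - k' = Suc (Suc i)" "m - Suc k' = Suc i" using 3 less by (simp_all add: i_def)
    have IH: "c (Suc (Suc i)) \<le> d k'" "d k' \<le> hi" "\<not> J (c (Suc i)) (d k')"
      using less.IH[of k'] 3 less i by auto
    have ii: "Suc (Suc i) \<le> m" using i by simp
    have dk: "d k = max_start J (d k')" using 3 by (simp add: d_def)
    note gap = max_start_in_left_chain_gap[OF J c ii IH, folded dk]
    have "\<not> J (c (m - Suc k)) (d k)" if "k < m"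
    proof -
      have "0 < i" "m - Suc k = i - 1" using that by (simp_all add: i_def)
      moreover have "c (i - 1) \<le> d k" using left_chain_mono[OF c, of "i - 1" i] gap ii by simp
      ultimately show ?thesis
        using left_chain_J_minimal[OF c, of "i - 1" "d k"] gap ii by simp
    qed
    then show ?thesis using gap left_chain_bounds[OF c, of "Suc i"] ii by (simp add: i_def)
  qed
qed

lemma right_chain_greedy:
  assumes J: "segment_ideal J lo hi" and c: "left_chain J m lo hi c"
  shows "right_chain J m lo hi (greedy_right_chain J hi)"
proof -
  let ?d = "greedy_right_chain J hi"
  note inv = greedy_right_chain_interlaces[OF J c]
  have last: "?d m = lo"
  proof (cases "m = 0")
    case True
    then show ?thesis using left_chainD[OF c] by simp
  next
    case False
    then show ?thesis using inv[of m] left_chainD[OF c] by simp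
  qed
  have first: "Suc (?d 1) = hi" if "0 < m"
    using left_chain_strict[OF J c, of 0] left_chain_mono[OF c, of 1 m] left_chainD[OF c] that
    by simp
  have step: "?d (Suc k) \<le> ?d k \<and> \<not> J (?d (Suc k)) (?d k)" if k: "k < m" for k
  proof -
    have "m - k = Suc (m - Suc k)" using k by simp
    then have d: "c (m - Suc k) \<le> ?d (Suc k)" "?d (Suc k) < c (m - k)" "c (m - k) \<le> ?d k"
      "?d k \<le> hi" "\<not> J (c (m - Suc k)) (?d k)"
      using inv[of k] inv[of "Suc k"] k by auto
    moreover have "lo \<le> c (m - Suc k)" using left_chain_bounds[OF c] by simp
    ultimately show ?thesis
      using segment_ideal_mono[OF J] by (meson less_imp_le order_refl order_trans)
  qed
  have pair: "J (?d (Suc (Suc k))) (?d k) \<and> (\<forall>x. ?d (Suc (Suc k)) < x \<and> x \<le> ?d k \<longrightarrow> \<not> J x (?d k))"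
    if k: "Suc (Suc k) \<le> m" for k
  proof -
    have "m - k = Suc (Suc (m - Suc (Suc k)))" using k by simp
    then have "J (c (m - Suc (Suc k))) (c (m - k))"
      using left_chain_J[OF c, of "m - Suc (Suc k)"] by simp
    moreover have "lo \<le> c (m - Suc (Suc k))" "c (m - Suc (Suc k)) \<le> c (m - k)"
      using left_chain_bounds[OF c] left_chain_mono[OF c] by simp_all
    moreover have "c (m - k) \<le> ?d k" "?d k \<le> hi" using inv[of k] k by simp_all
    ultimately have J': "J (c (m - Suc (Suc k))) (?d k)"
      using segment_ideal_mono[OF J] by (meson order_refl order_trans)
    have "x \<le> ?d (Suc (Suc k))" if "J x (?d k)" for x
      using max_start(2)[of J x "?d k"] that segment_ideal_long[OF J that] by simp
    moreover have "J (?d (Suc (Suc k))) (?d k)"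
      using max_start(1)[of J _ "?d k"] J' segment_ideal_long[OF J J'] by simp
    ultimately show ?thesis using leD by blast
  qed
  show ?thesis unfolding right_chain_def using last first step pair by simp
qed

lemma segment_ideal_mirror:
  assumes J: "segment_ideal J lo hi" and "lo \<le> hi" "hi \<le> N"
  shows "segment_ideal (\<lambda>x y. J (N - y) (N - x)) (N - hi) (N - lo)"
  unfolding segment_ideal_def
proof (intro conjI allI impI)
  fix i' i j j'
  assume "N - hi \<le> i'" "i' \<le> i" "i \<le> j" "j \<le> j'" "j' \<le> N - lo" "J (N - j) (N - i)"
  then show "J (N - j') (N - i')"
    using segment_ideal_mono[OF J, of "N - j'" "N - j" "N - i" "N - i'"] \<open>lo \<le> hi\<close> \<open>hi \<le> N\<close>
    by fastforce
next
  fix i j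
  assume "J (N - j) (N - i)"
  then show "Suc i < j" using segment_ideal_long[OF J] by fastforce
qed

(* The reflection x |-> N - x turns right chains into left chains and back; J' is any relation
   agreeing with the reflected J, so that reflecting twice returns J itself. *)
lemma right_chain_mirror:
  assumes d: "right_chain J m lo hi d" and "hi \<le> N"
    and J': "\<And>x y. \<lbrakk>N - hi \<le> x; x \<le> y; y \<le> N - lo\<rbrakk> \<Longrightarrow> J' x y = J (N - y) (N - x)"
  shows "left_chain J' m (N - hi) (N - lo) (\<lambda>k. N - d k)"
proof -
  have J'J: "J' (N - y) (N - x) = J x y" if "lo \<le> x" "x \<le> y" "y \<le> hi" for x y
    using J'[of "N - y" "N - x"] that \<open>hi \<le> N\<close> by simp
  note b = right_chain_bounds[OF d]
  have step: "N - d k \<le> N - d (Suc k) \<and> \<not> J' (N - d k) (N - d (Suc k))" if k: "k < m" for k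
  proof -
    have "lo \<le> d (Suc k)" "d (Suc k) \<le> d k" "d k \<le> hi"
      using b right_chain_Suc_le[OF d] k by auto
    then show ?thesis using J'J right_chain_notJ[OF d k] by auto
  qed
  have pair: "J' (N - d k) (N - d (Suc (Suc k)))
      \<and> (\<forall>x. N - d k \<le> x \<and> x < N - d (Suc (Suc k)) \<longrightarrow> \<not> J' (N - d k) x)"
    if k: "Suc (Suc k) \<le> m" for k
  proof -
    have bk: "lo \<le> d (Suc (Suc k))" "d (Suc (Suc k)) \<le> d k" "d k \<le> hi"
      using b right_chain_antimono[OF d] k by auto
    have "\<not> J' (N - d k) x" if x: "N - d k \<le> x" "x < N - d (Suc (Suc k))" for x
    proof -
      have "d (Suc (Suc k)) < N - x" "N - x \<le> d k" "x = N - (N - x)"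
        using x bk \<open>hi \<le> N\<close> by auto
      then show ?thesis using J'J[of "N - x" "d k"] right_chain_J_maximal[OF d k] bk by auto
    qed
    then show ?thesis using J'J bk right_chain_J[OF d k] by simp
  qed
  show ?thesis
    unfolding left_chain_def using step pair right_chainD[OF d] \<open>hi \<le> N\<close> by auto
qed

lemma left_chain_mirror:
  assumes c: "left_chain J m lo hi c" and "hi \<le> N"
    and J': "\<And>x y. \<lbrakk>N - hi \<le> x; x \<le> y; y \<le> N - lo\<rbrakk> \<Longrightarrow> J' x y = J (N - y) (N - x)"
  shows "right_chain J' m (N - hi) (N - lo) (\<lambda>k. N - c k)"
proof -
  have J'J: "J' (N - y) (N - x) = J x y" if "lo \<le> x" "x \<le> y" "y \<le> hi" for x y
    using J'[of "N - y" "N - x"] that \<open>hi \<le> N\<close> by simp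
  note b = left_chain_bounds[OF c]
  have step: "N - c (Suc k) \<le> N - c k \<and> \<not> J' (N - c (Suc k)) (N - c k)" if k: "k < m" for k
  proof -
    have "lo \<le> c k" "c k \<le> c (Suc k)" "c (Suc k) \<le> hi"
      using b left_chain_le_Suc[OF c] k by auto
    then show ?thesis using J'J left_chain_notJ[OF c k] by auto
  qed
  have pair: "J' (N - c (Suc (Suc k))) (N - c k)
      \<and> (\<forall>x. N - c (Suc (Suc k)) < x \<and> x \<le> N - c k \<longrightarrow> \<not> J' x (N - c k))"
    if k: "Suc (Suc k) \<le> m" for k
  proof -
    have bk: "lo \<le> c k" "c k \<le> c (Suc (Suc k))" "c (Suc (Suc k)) \<le> hi"
      using b left_chain_mono[OF c] k by auto
    have "\<not> J' x (N - c k)" if x: "N - c (Suc (Suc k)) < x" "x \<le> N - c k" for x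
    proof -
      have "c k \<le> N - x" "N - x < c (Suc (Suc k))" "x = N - (N - x)"
        using x bk \<open>hi \<le> N\<close> by auto
      then show ?thesis using J'J[of "c k" "N - x"] left_chain_J_minimal[OF c k] bk by auto
    qed
    then show ?thesis using J'J bk left_chain_J[OF c k] by simp
  qed
  have first: "Suc (N - c 1) = N - lo" if "0 < m"
    using left_chainD[OF c] left_chain_mono[OF c, of 1 m] \<open>hi \<le> N\<close> that by simp
  show ?thesis
    unfolding right_chain_def using step pair first left_chainD[OF c] by auto
qed

lemma left_chain_exists:
  assumes J: "segment_ideal J lo hi" and d: "right_chain J m lo hi d"
  shows "\<exists>c. left_chain J m lo hi c"
proof -
  let ?J = "\<lambda>x y. J (hi - y) (hi - x)"
  have "lo \<le> hi" using right_chain_bounds[OF d, of 0] by simp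
  have "left_chain ?J m 0 (hi - lo) (\<lambda>k. hi - d k)"
    using right_chain_mirror[OF d order_refl] by simp
  then have "right_chain ?J m 0 (hi - lo) (greedy_right_chain ?J (hi - lo))"
    using right_chain_greedy segment_ideal_mirror[OF J \<open>lo \<le> hi\<close> order_refl] by simp
  from right_chain_mirror[OF this, of hi J] \<open>lo \<le> hi\<close> show ?thesis by auto
qed

lemma right_chain_unique:
  assumes d: "right_chain J m lo hi d" and d': "right_chain J m lo hi d'" and "k \<le> m"
  shows "d k = d' k"
proof -
  have "hi - d k = hi - d' k"
    using left_chain_unique[OF right_chain_mirror[OF d order_refl]
        right_chain_mirror[OF d' order_refl] \<open>k \<le> m\<close>]
    by simp
  then show ?thesis using right_chain_bounds[OF d \<open>k \<le> m\<close>] right_chain_bounds[OF d' \<open>k \<le> m\<close>] by simp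
qed

lemma left_chains_interlace:
  assumes J: "segment_ideal J lo hi"
    and c1: "left_chain J m lo1 hi1 c1" and c2: "left_chain J m lo2 hi2 c2"
    and "lo \<le> lo1" "lo1 < lo2" "hi2 \<le> hi" and "Suc (2 * j) \<le> m"
  shows "c1 (Suc (2 * j)) \<le> c2 (2 * j)"
  using \<open>Suc (2 * j) \<le> m\<close>
proof (induction j)
  case 0
  then show ?case using left_chainD[OF c1] left_chainD[OF c2] \<open>lo1 < lo2\<close> by simp
next
  case (Suc j)
  let ?i = "Suc (2 * j)"
  have IH: "c1 ?i \<le> c2 (2 * j)" and m: "Suc (Suc ?i) \<le> m" using Suc by simp_all
  have "J (c2 (2 * j)) (c2 (Suc (Suc (2 * j))))" using left_chain_J[OF c2] m by simp
  moreover have "lo \<le> c1 ?i" using left_chain_bounds[OF c1, of ?i] m \<open>lo \<le> lo1\<close> by simp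
  moreover have "c2 (2 * j) \<le> c2 (Suc (Suc (2 * j)))" "c2 (Suc (Suc (2 * j))) \<le> hi"
    using left_chain_mono[OF c2] left_chain_bounds(2)[OF c2, of "Suc (Suc (2 * j))"] m \<open>hi2 \<le> hi\<close>
    by auto
  ultimately have "J (c1 ?i) (c2 (Suc (Suc (2 * j))))"
    using segment_ideal_mono[OF J _ IH _ order_refl] by simp
  then have "\<not> c2 (Suc (Suc (2 * j))) < c1 (Suc (Suc ?i))"
    using left_chain_J_minimal[OF c1 m] IH \<open>c2 (2 * j) \<le> c2 (Suc (Suc (2 * j)))\<close> by auto
  then show ?case by simp
qed

lemma left_chain_snoc:
  assumes c: "left_chain J (Suc k) lo hi c"
    and e: "J (c k) e" "\<forall>x. c k \<le> x \<and> x < e \<longrightarrow> \<not> J (c k) x"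
    and "hi \<le> e" "\<not> J hi e"
  shows "left_chain J (Suc (Suc k)) lo e (c(Suc (Suc k) := e))"
  unfolding left_chain_def using left_chainD[OF c] e \<open>hi \<le> e\<close> \<open>\<not> J hi e\<close>
  by (auto simp: less_Suc_eq le_Suc_eq)

lemma left_chain_extend:
  assumes J: "segment_ideal J 0 N"
    and c1: "left_chain J m 0 m1 c1" and c2: "left_chain J m m2 N c2"
    and "even m" "0 < m2" "m1 < N" "\<not> J m1 N"
  shows "\<exists>e c. left_chain J (Suc m) 0 e c \<and> (\<forall>k\<le>m. c k = c1 k) \<and> m1 < e \<and> e \<le> N"
proof (cases "m = 0")
  case True
  then have "left_chain J (Suc m) 0 1 (c1(1 := 1))" "\<forall>k\<le>m. (c1(1 := 1)) k = c1 k"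
    using left_chainD[OF c1] segment_ideal_long[OF J, of 0 1] unfolding left_chain_def by auto
  moreover have "m1 = 0" using left_chainD[OF c1] True by simp
  ultimately show ?thesis using \<open>m1 < N\<close> by (metis One_nat_def Suc_leI zero_less_one)
next
  case False
  obtain h' where "m = 2 * h'" using \<open>even m\<close> by (rule evenE)
  with False obtain h where m: "m = Suc (Suc (2 * h))" by (cases h') auto
  let ?i = "Suc (2 * h)"
  have "c1 ?i \<le> c2 (2 * h)"
    using left_chains_interlace[OF J c1 c2] \<open>0 < m2\<close> m by simp
  moreover have "J (c2 (2 * h)) N" "c2 (2 * h) \<le> N"
    using left_chain_J[OF c2, of "2 * h"] left_chain_bounds[OF c2, of "2 * h"] left_chain_m[OF c2] m
    by simp_all
  ultimately have JN: "J (c1 ?i) N"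
    using segment_ideal_mono[OF J _ _ _ order_refl order_refl] by simp
  define e where "e = (LEAST x. J (c1 ?i) x)"
  have Je: "J (c1 ?i) e" and "e \<le> N"
    using LeastI[of "J (c1 ?i)", OF JN] Least_le[of "J (c1 ?i)", OF JN] e_def by auto
  have e_min: "\<forall>x. c1 ?i \<le> x \<and> x < e \<longrightarrow> \<not> J (c1 ?i) x" using not_less_Least e_def by blast
  have "m1 < e"
  proof (rule ccontr)
    assume "\<not> m1 < e"
    then have "J (c1 ?i) m1"
      using segment_ideal_mono[OF J _ order_refl _ _ _ Je] segment_ideal_long[OF J Je] \<open>m1 < N\<close>
      by simp
    moreover have "?i < m" using m by simp
    ultimately show False using left_chain_notJ[OF c1, of ?i] left_chain_m[OF c1] m by simp
  qed
  moreover have "\<not> J m1 e"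
    using segment_ideal_mono[OF J _ order_refl _ \<open>e \<le> N\<close> order_refl] \<open>m1 < e\<close> \<open>\<not> J m1 N\<close> by auto
  ultimately have "left_chain J (Suc m) 0 e (c1(Suc m := e))"
    using left_chain_snoc[of J ?i 0 m1 c1 e] c1 Je e_min m by simp
  then show ?thesis using \<open>m1 < e\<close> \<open>e \<le> N\<close> by fastforce
qed

lemma right_chain_extend:
  assumes J: "segment_ideal J 0 N"
    and d1: "right_chain J m 0 m1 d1" and d2: "right_chain J m m2 N d2"
    and "even m" "0 < m2" "m1 < N" "\<not> J 0 m2"
  shows "\<exists>s d. right_chain J (Suc m) s N d \<and> (\<forall>k\<le>m. d k = d2 k) \<and> s < m2"
proof -
  let ?J = "\<lambda>x y. J (N - y) (N - x)"
  have "m2 \<le> N" using right_chain_bounds[OF d2, of 0] by simp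
  have J': "segment_ideal ?J 0 N" using segment_ideal_mirror[OF J le0 order_refl] by simp
  have c2: "left_chain ?J m 0 (N - m2) (\<lambda>k. N - d2 k)"
    using right_chain_mirror[OF d2 order_refl] by simp
  have c1: "left_chain ?J m (N - m1) N (\<lambda>k. N - d1 k)"
    using right_chain_mirror[OF d1, of N] \<open>m1 < N\<close> by simp
  obtain e c where c: "left_chain ?J (Suc m) 0 e c" "\<forall>k\<le>m. c k = N - d2 k"
    and e: "N - m2 < e" "e \<le> N"
    using left_chain_extend[OF J' c2 c1 \<open>even m\<close>] assms \<open>m2 \<le> N\<close> by auto
  have "right_chain J (Suc m) (N - e) N (\<lambda>k. N - c k)"
    using left_chain_mirror[OF c(1) e(2), of J] by simp
  moreover have "\<forall>k\<le>m. N - c k = d2 k" using c(2) right_chain_bounds[OF d2] by simp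
  moreover have "N - e < m2" using e \<open>m2 \<le> N\<close> by linarith
  ultimately show ?thesis by blast
qed

section \<open>Subpaths\<close>

locale monomial_quiver = quiver_monomial +
  assumes t_in_Q0: "\<forall>e\<in>Q1. t e \<in> Q0"
    and relations_plen_ge_2: "\<forall>r\<in>R. 2 \<le> plen r"
begin

definition vertex_at where
  "vertex_at p j = (if j < length (fst p) then t (fst p ! j) else snd p)"

definition subpath where
  "subpath p i j = (take (j - i) (drop i (fst p)), vertex_at p j)"

lemma vertex_at_0: "vertex_at p 0 = ptgt p"
  by (simp add: vertex_at_def ptgt_def hd_conv_nth)

lemma vertex_at_plen: "vertex_at p (plen p) = psrc p"
  by (simp add: vertex_at_def plen_def psrc_def)

lemma vertex_at_pcomp:
  assumes "ptgt y = psrc x"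
  shows "vertex_at (pcomp x y) j = (if j \<le> plen x then vertex_at x j else vertex_at y (j - plen x))"
  using assms
  by (cases "fst y") (auto simp: vertex_at_def pcomp_def plen_def ptgt_def psrc_def nth_append)

lemma is_path_iff_vertex_at:
  "is_path p \<longleftrightarrow> snd p \<in> Q0 \<and> set (fst p) \<subseteq> Q1 \<and> (\<forall>k<plen p. s (fst p ! k) = vertex_at p (Suc k))"
proof -
  have "(\<forall>k<length W. s (W ! k) = (if Suc k < length W then t (W ! Suc k) else v))
    \<longleftrightarrow> (\<forall>k. Suc k < length W \<longrightarrow> s (W ! k) = t (W ! Suc k)) \<and> (W \<noteq> [] \<longrightarrow> s (last W) = v)"
    for W and v
  proof (intro iffI conjI allI impI)
    fix k assume "\<forall>k<length W. s (W ! k) = (if Suc k < length W then t (W ! Suc k) else v)"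
    then show "Suc k < length W \<Longrightarrow> s (W ! k) = t (W ! Suc k)"
      and "W \<noteq> [] \<Longrightarrow> s (last W) = v"
      by (auto simp: last_conv_nth dest: spec[of _ "length W - 1"])
  next
    fix k assume "(\<forall>k. Suc k < length W \<longrightarrow> s (W ! k) = t (W ! Suc k)) \<and> (W \<noteq> [] \<longrightarrow> s (last W) = v)"
      and "k < length W"
    moreover have "\<not> Suc k < length W \<Longrightarrow> k = length W - 1" using \<open>k < length W\<close> by simp
    ultimately show "s (W ! k) = (if Suc k < length W then t (W ! Suc k) else v)"
      by (auto simp: last_conv_nth)
  qed
  then show ?thesis by (simp add: is_path_def vertex_at_def plen_def)
qed

lemma plen_subpath [simp]: "j \<le> plen p \<Longrightarrow> plen (subpath p i j) = j - i"
  by (simp add: subpath_def plen_def)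

lemma psrc_subpath [simp]: "psrc (subpath p i j) = vertex_at p j"
  by (simp add: subpath_def psrc_def)

lemma ptgt_subpath [simp]: "\<lbrakk>i \<le> j; j \<le> plen p\<rbrakk> \<Longrightarrow> ptgt (subpath p i j) = vertex_at p i"
  by (auto simp: ptgt_def subpath_def vertex_at_def plen_def hd_drop_conv_nth)

lemma vertex_at_subpath:
  "\<lbrakk>i \<le> j; j \<le> plen p; x \<le> j - i\<rbrakk> \<Longrightarrow> vertex_at (subpath p i j) x = vertex_at p (i + x)"
  by (auto simp: subpath_def vertex_at_def plen_def)

lemma subpath_subpath:
  assumes "i \<le> j" "j \<le> plen p" "x \<le> y" "y \<le> j - i"
  shows "subpath (subpath p i j) x y = subpath p (i + x) (i + y)"
proof -
  have "fst (subpath (subpath p i j) x y) = fst (subpath p (i + x) (i + y))"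
    using assms by (simp add: subpath_def drop_take add.commute min_def)
  moreover have "snd (subpath (subpath p i j) x y) = snd (subpath p (i + x) (i + y))"
    using assms by (simp add: subpath_def[of _ _ y] subpath_def[of p "i + x"] vertex_at_subpath)
  ultimately show ?thesis by (simp add: prod_eq_iff)
qed

lemma subpath_full [simp]: "subpath p 0 (plen p) = p"
  by (simp add: subpath_def vertex_at_def plen_def)

lemma triv_eq_subpath: "triv (ptgt p) = subpath p 0 0" "triv (psrc p) = subpath p (plen p) (plen p)"
  by (simp_all add: triv_def subpath_def vertex_at_0 vertex_at_plen)

lemma pcomp_subpath:
  assumes "i \<le> j" "j \<le> k" "k \<le> plen p"
  shows "pcomp (subpath p i j) (subpath p j k) = subpath p i k"
proof -
  have "k - i = (j - i) + (k - j)" "drop j (fst p) = drop (j - i) (drop i (fst p))"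
    using assms by simp_all
  then show ?thesis by (simp add: pcomp_def subpath_def take_add)
qed

lemma ptgt_pcomp: "ptgt y = psrc x \<Longrightarrow> ptgt (pcomp x y) = ptgt x"
  by (auto simp: ptgt_def pcomp_def psrc_def)

lemma psrc_pcomp [simp]: "psrc (pcomp x y) = psrc y"
  by (simp add: pcomp_def psrc_def)

lemma plen_pcomp [simp]: "plen (pcomp x y) = plen x + plen y"
  by (simp add: pcomp_def plen_def)

lemma pcomp_assoc: "pcomp x (pcomp y z) = pcomp (pcomp x y) z"
  by (simp add: pcomp_def)

lemma pcomp_eq_subpaths:
  assumes "ptgt y = psrc x"
  shows "x = subpath (pcomp x y) 0 (plen x)" "y = subpath (pcomp x y) (plen x) (plen (pcomp x y))"
proof -
  have "vertex_at (pcomp x y) (plen x) = psrc x" "vertex_at (pcomp x y) (plen (pcomp x y)) = psrc y"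
    using vertex_at_pcomp[OF assms, of "plen x"] vertex_at_plen[of x] vertex_at_plen[of "pcomp x y"]
    by simp_all
  then show "x = subpath (pcomp x y) 0 (plen x)"
    "y = subpath (pcomp x y) (plen x) (plen (pcomp x y))"
    by (simp_all add: subpath_def pcomp_def plen_def psrc_def prod_eq_iff)
qed

lemma vertex_at_in_Q0: "is_path p \<Longrightarrow> vertex_at p j \<in> Q0"
  using t_in_Q0 nth_mem[of j "fst p"] by (auto simp: vertex_at_def is_path_def subset_iff)

lemma is_path_subpath:
  assumes p: "is_path p" and "i \<le> j" "j \<le> plen p"
  shows "is_path (subpath p i j)"
  unfolding is_path_iff_vertex_at
proof (intro conjI allI impI)
  fix k assume "k < plen (subpath p i j)"
  then have k: "Suc k \<le> j - i" using assms by simp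
  then have "fst (subpath p i j) ! k = fst p ! (i + k)"
    using assms by (simp add: subpath_def plen_def)
  then show "s (fst (subpath p i j) ! k) = vertex_at (subpath p i j) (Suc k)"
    using p k assms vertex_at_subpath[OF assms(2,3) k] by (simp add: is_path_iff_vertex_at)
next
  show "set (fst (subpath p i j)) \<subseteq> Q1"
    using p by (auto simp: subpath_def is_path_def dest: in_set_takeD in_set_dropD)
qed (simp add: subpath_def vertex_at_in_Q0[OF p])

lemma is_path_pcomp:
  assumes x: "is_path x" and y: "is_path y" and xy: "ptgt y = psrc x"
  shows "is_path (pcomp x y)"
  unfolding is_path_iff_vertex_at
proof (intro conjI allI impI)
  fix k assume "k < plen (pcomp x y)"
  then consider "k < plen x" | "plen x \<le> k" "k - plen x < plen y" by fastforce
  then show "s (fst (pcomp x y) ! k) = vertex_at (pcomp x y) (Suc k)"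
  proof cases
    case 1
    then show ?thesis using x vertex_at_pcomp[OF xy]
      by (simp add: is_path_iff_vertex_at pcomp_def plen_def nth_append)
  next
    case 2
    then show ?thesis using y vertex_at_pcomp[OF xy] is_path_iff_vertex_at[of y]
      by (simp add: pcomp_def plen_def nth_append Suc_diff_le)
  qed
qed (use x y in \<open>auto simp: is_path_def pcomp_def\<close>)

lemma occ_iff_subpaths:
  assumes p: "is_path p"
  shows "occ p q x y \<longleftrightarrow>
    (\<exists>i j. i \<le> j \<and> j \<le> plen p \<and> x = subpath p 0 i \<and> q = subpath p i j \<and> y = subpath p j (plen p))"
proof
  assume "occ p q x y"
  then have qy: "ptgt y = psrc q" and xqy: "ptgt (pcomp q y) = psrc x"
    and pe: "p = pcomp x (pcomp q y)"
    by (auto simp: occ_def ptgt_pcomp)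
  have "x = subpath p 0 (plen x)" "pcomp q y = subpath p (plen x) (plen p)"
    using pcomp_eq_subpaths[OF xqy] pe by simp_all
  moreover have "q = subpath (pcomp q y) 0 (plen q)"
    "y = subpath (pcomp q y) (plen q) (plen q + plen y)"
    using pcomp_eq_subpaths[OF qy] by simp_all
  moreover have "plen p = plen x + (plen q + plen y)" using pe by simp
  ultimately show "\<exists>i j. i \<le> j \<and> j \<le> plen p \<and> x = subpath p 0 i \<and> q = subpath p i j
    \<and> y = subpath p j (plen p)"
    using subpath_subpath[of "plen x" "plen p" p]
    by (intro exI[of _ "plen x"] exI[of _ "plen x + plen q"]) (simp add: add.assoc)
next
  assume "\<exists>i j. i \<le> j \<and> j \<le> plen p \<and> x = subpath p 0 i \<and> q = subpath p i j
    \<and> y = subpath p j (plen p)"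
  then obtain i j where ij: "i \<le> j" "j \<le> plen p"
    and e: "x = subpath p 0 i" "q = subpath p i j" "y = subpath p j (plen p)"
    by blast
  then have "p = pcomp x (pcomp q y)" using pcomp_subpath[of _ _ "plen p" p] by simp
  then show "occ p q x y" using e ij p by (auto simp: occ_def is_path_subpath)
qed

lemma plen_subpath_le: "plen (subpath p i j) \<le> j - i"
  by (simp add: subpath_def plen_def)

lemma subpath_eq_iff:
  assumes "i \<le> x" "x \<le> j" "i \<le> y" "y \<le> j" "j \<le> plen p"
  shows "subpath p i x = subpath p i y \<longleftrightarrow> x = y" "subpath p x j = subpath p y j \<longleftrightarrow> x = y"
proof -
  have "plen (subpath p i x) = x - i" "plen (subpath p i y) = y - i"
    "plen (subpath p x j) = j - x" "plen (subpath p y j) = j - y"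
    using assms by simp_all
  then show "subpath p i x = subpath p i y \<longleftrightarrow> x = y" "subpath p x j = subpath p y j \<longleftrightarrow> x = y"
    using assms by (metis le_add_diff_inverse, metis diff_diff_cancel)
qed

lemma is_suffix_subpath_iff:
  assumes P: "is_path P" and ij: "i \<le> j" "j \<le> plen P"
  shows "is_suffix q (subpath P i j) \<longleftrightarrow> (\<exists>x. i \<le> x \<and> x \<le> j \<and> q = subpath P i x)"
proof -
  let ?X = "subpath P i j"
  have X: "is_path ?X" "plen ?X = j - i" using is_path_subpath[OF assms] ij by simp_all
  have "is_suffix q ?X \<longleftrightarrow> (\<exists>b\<le>j - i. q = subpath ?X 0 b)"
  proof
    assume "is_suffix q ?X"
    then obtain a b where "a \<le> b" "b \<le> j - i" "subpath ?X 0 0 = subpath ?X 0 a" "q = subpath ?X a b"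
      unfolding is_suffix_def occ_iff_subpaths[OF X(1)] triv_eq_subpath X(2) by blast
    then show "\<exists>b\<le>j - i. q = subpath ?X 0 b" using subpath_eq_iff(1)[of 0 0 "plen ?X" a ?X] X(2)
      by (metis le0 order_refl order_trans)
  next
    assume "\<exists>b\<le>j - i. q = subpath ?X 0 b"
    then show "is_suffix q ?X"
      unfolding is_suffix_def occ_iff_subpaths[OF X(1)] triv_eq_subpath X(2) by blast
  qed
  also have "\<dots> \<longleftrightarrow> (\<exists>x. i \<le> x \<and> x \<le> j \<and> q = subpath P i x)"
  proof
    assume "\<exists>b\<le>j - i. q = subpath ?X 0 b"
    then obtain b where "b \<le> j - i" "q = subpath P i (i + b)"
      using subpath_subpath[OF ij, of 0] by auto
    then show "\<exists>x. i \<le> x \<and> x \<le> j \<and> q = subpath P i x" using ij by (intro exI[of _ "i + b"]) auto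
  next
    assume "\<exists>x. i \<le> x \<and> x \<le> j \<and> q = subpath P i x"
    then obtain x where "i \<le> x" "x \<le> j" "q = subpath P i x" by blast
    then show "\<exists>b\<le>j - i. q = subpath ?X 0 b"
      using subpath_subpath[OF ij, of 0 "x - i"] by (intro exI[of _ "x - i"]) auto
  qed
  finally show ?thesis .
qed

lemma is_prefix_subpath_iff:
  assumes P: "is_path P" and ij: "i \<le> j" "j \<le> plen P"
  shows "is_prefix q (subpath P i j) \<longleftrightarrow> (\<exists>x. i \<le> x \<and> x \<le> j \<and> q = subpath P x j)"
proof -
  let ?X = "subpath P i j"
  have X: "is_path ?X" "plen ?X = j - i" using is_path_subpath[OF assms] ij by simp_all
  have "is_prefix q ?X \<longleftrightarrow> (\<exists>a\<le>j - i. q = subpath ?X a (j - i))"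
  proof
    assume "is_prefix q ?X"
    then obtain a b where "a \<le> b" "b \<le> j - i" "q = subpath ?X a b"
      "subpath ?X (j - i) (j - i) = subpath ?X b (j - i)"
      unfolding is_prefix_def occ_iff_subpaths[OF X(1)] triv_eq_subpath X(2) by blast
    then show "\<exists>a\<le>j - i. q = subpath ?X a (j - i)"
      using subpath_eq_iff(2)[of 0 "j - i" "j - i" b ?X] X(2) by auto
  next
    assume "\<exists>a\<le>j - i. q = subpath ?X a (j - i)"
    then show "is_prefix q ?X"
      unfolding is_prefix_def occ_iff_subpaths[OF X(1)] triv_eq_subpath X(2) by blast
  qed
  also have "\<dots> \<longleftrightarrow> (\<exists>x. i \<le> x \<and> x \<le> j \<and> q = subpath P x j)"
  proof
    assume "\<exists>a\<le>j - i. q = subpath ?X a (j - i)"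
    then obtain a where "a \<le> j - i" "q = subpath P (i + a) j"
      using subpath_subpath[OF ij _ order_refl] ij by auto
    then show "\<exists>x. i \<le> x \<and> x \<le> j \<and> q = subpath P x j" using ij by (intro exI[of _ "i + a"]) auto
  next
    assume "\<exists>x. i \<le> x \<and> x \<le> j \<and> q = subpath P x j"
    then obtain x where "i \<le> x" "x \<le> j" "q = subpath P x j" by blast
    then show "\<exists>a\<le>j - i. q = subpath ?X a (j - i)"
      using subpath_subpath[OF ij, of "x - i" "j - i"] ij by (intro exI[of _ "x - i"]) auto
  qed
  finally show ?thesis .
qed

definition subpath_inI :: "('a, 'b) qpath \<Rightarrow> nat \<Rightarrow> nat \<Rightarrow> bool" where
  "subpath_inI P i j \<longleftrightarrow> inI (subpath P i j)"

lemma proper_suffixes_notin_I_iff: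
  assumes "is_path P" "i \<le> j" "j \<le> plen P"
  shows "(\<forall>q. is_suffix q (subpath P i j) \<and> q \<noteq> subpath P i j \<longrightarrow> \<not> inI q)
    \<longleftrightarrow> (\<forall>x. i \<le> x \<and> x < j \<longrightarrow> \<not> subpath_inI P i x)"
proof -
  have "is_suffix q (subpath P i j) \<and> q \<noteq> subpath P i j \<longleftrightarrow> (\<exists>x. i \<le> x \<and> x < j \<and> q = subpath P i x)"
    for q
  proof -
    have "q = subpath P i x \<and> q \<noteq> subpath P i j \<longleftrightarrow> q = subpath P i x \<and> x \<noteq> j"
      if "i \<le> x" "x \<le> j" for x
      using subpath_eq_iff(1)[of i x j j P] that assms by auto
    then show ?thesis unfolding is_suffix_subpath_iff[OF assms] by (auto simp: less_le)
  qed
  then show ?thesis by (auto simp: subpath_inI_def simp del: split_paired_All)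
qed

lemma proper_prefixes_notin_I_iff:
  assumes "is_path P" "i \<le> j" "j \<le> plen P"
  shows "(\<forall>q. is_prefix q (subpath P i j) \<and> q \<noteq> subpath P i j \<longrightarrow> \<not> inI q)
    \<longleftrightarrow> (\<forall>x. i < x \<and> x \<le> j \<longrightarrow> \<not> subpath_inI P x j)"
proof -
  have "is_prefix q (subpath P i j) \<and> q \<noteq> subpath P i j \<longleftrightarrow> (\<exists>x. i < x \<and> x \<le> j \<and> q = subpath P x j)"
    for q
  proof -
    have "q = subpath P x j \<and> q \<noteq> subpath P i j \<longleftrightarrow> q = subpath P x j \<and> x \<noteq> i"
      if "i \<le> x" "x \<le> j" for x
      using subpath_eq_iff(2)[of i x j i P] that assms by auto
    then show ?thesis unfolding is_prefix_subpath_iff[OF assms] by (auto simp: less_le)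
  qed
  then show ?thesis by (auto simp: subpath_inI_def simp del: split_paired_All)
qed

lemma inI_plen_ge_2: "inI p \<Longrightarrow> 2 \<le> plen p"
  using relations_plen_ge_2 by (auto simp: inI_def occ_def)

lemma inI_subpath_iff:
  assumes P: "is_path P" and ij: "i \<le> j" "j \<le> plen P"
  shows "inI (subpath P i j) \<longleftrightarrow> (\<exists>r\<in>R. \<exists>a b. i \<le> a \<and> a \<le> b \<and> b \<le> j \<and> r = subpath P a b)"
proof -
  let ?X = "subpath P i j"
  have X: "is_path ?X" "plen ?X = j - i" using is_path_subpath[OF assms] ij by simp_all
  have "inI ?X \<longleftrightarrow> (\<exists>r\<in>R. \<exists>a b. a \<le> b \<and> b \<le> j - i \<and> r = subpath ?X a b)"
    unfolding inI_def occ_iff_subpaths[OF X(1)] X(2) by blast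
  also have "\<dots> \<longleftrightarrow> (\<exists>r\<in>R. \<exists>a b. i \<le> a \<and> a \<le> b \<and> b \<le> j \<and> r = subpath P a b)"
  proof
    assume "\<exists>r\<in>R. \<exists>a b. a \<le> b \<and> b \<le> j - i \<and> r = subpath ?X a b"
    then obtain r a b where "r \<in> R" "a \<le> b" "b \<le> j - i" "r = subpath P (i + a) (i + b)"
      using subpath_subpath[OF ij] by blast
    then show "\<exists>r\<in>R. \<exists>a b. i \<le> a \<and> a \<le> b \<and> b \<le> j \<and> r = subpath P a b"
      using ij by (intro bexI[of _ r] exI[of _ "i + a"] exI[of _ "i + b"]) auto
  next
    assume "\<exists>r\<in>R. \<exists>a b. i \<le> a \<and> a \<le> b \<and> b \<le> j \<and> r = subpath P a b"
    then obtain r a b where "r \<in> R" "i \<le> a" "a \<le> b" "b \<le> j" "r = subpath P a b" by blast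
    then show "\<exists>r\<in>R. \<exists>a b. a \<le> b \<and> b \<le> j - i \<and> r = subpath ?X a b"
      using subpath_subpath[OF ij, of "a - i" "b - i"]
      by (intro bexI exI[of _ "a - i"] exI[of _ "b - i"]) auto
  qed
  finally show ?thesis .
qed

lemma segment_ideal_subpath_inI:
  assumes P: "is_path P" and "hi \<le> plen P"
  shows "segment_ideal (subpath_inI P) lo hi"
  unfolding segment_ideal_def
proof (intro conjI allI impI)
  fix i' i j j'
  assume "lo \<le> i'" "i' \<le> i" "i \<le> j" "j \<le> j'" "j' \<le> hi" "subpath_inI P i j"
  then show "subpath_inI P i' j'"
    unfolding subpath_inI_def using inI_subpath_iff[OF P] \<open>hi \<le> plen P\<close> by (meson order_trans)
next
  fix i j
  assume "subpath_inI P i j"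
  then show "Suc i < j"
    using inI_plen_ge_2 plen_subpath_le[of P i j] by (fastforce simp: subpath_inI_def)
qed

section \<open>Ambiguities inside a path\<close>

definition offset :: "('a, 'b) qpath list \<Rightarrow> nat \<Rightarrow> nat" where
  "offset us k = sum_list (map plen (take k us))"

lemma offset_0 [simp]: "offset us 0 = 0"
  by (simp add: offset_def)

lemma offset_Cons_Suc: "offset (u # us) (Suc k) = plen u + offset us k"
  by (simp add: offset_def)

lemma offset_mono: "a \<le> b \<Longrightarrow> offset us a \<le> offset us b"
  unfolding offset_def by (metis le_add_diff_inverse take_add map_append sum_list_append le_add1)

lemma chain_Cons_Cons: "chain (x # y # ys) \<longleftrightarrow> is_path x \<and> ptgt y = psrc x \<and> chain (y # ys)"
  by (auto simp: chain_def nth_Cons split: nat.splits)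

lemma plen_pcomp_list: "us \<noteq> [] \<Longrightarrow> plen (pcomp_list us) = offset us (length us)"
  by (induction us rule: pcomp_list.induct) (auto simp: offset_def)

lemma is_path_pcomp_list:
  assumes "chain us"
  shows "is_path (pcomp_list us) \<and> ptgt (pcomp_list us) = ptgt (us ! 0)"
  using assms
proof (induction us rule: pcomp_list.induct)
  case (3 x y ys)
  then show ?case using is_path_pcomp ptgt_pcomp by (simp add: chain_Cons_Cons)
qed (auto simp: chain_def)

lemma chain_nth_eq_subpath:
  assumes "chain us" "k < length us"
  shows "us ! k = subpath (pcomp_list us) (offset us k) (offset us (Suc k))"
  using assms
proof (induction us arbitrary: k rule: pcomp_list.induct)
  case (2 x)
  then show ?case by (simp add: offset_def)
next
  case (3 x y ys)
  let ?p = "pcomp_list (y # ys)"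
  have c: "ptgt ?p = psrc x" "chain (y # ys)"
    using is_path_pcomp_list[of "y # ys"] "3.prems"(1) by (simp_all add: chain_Cons_Cons)
  show ?case
  proof (cases k)
    case 0
    then show ?thesis using pcomp_eq_subpaths(1)[OF c(1)] by (simp add: offset_def)
  next
    case (Suc k')
    let ?a = "offset (y # ys) k'" and ?b = "offset (y # ys) (Suc k')"
    have "(y # ys) ! k' = subpath ?p ?a ?b" using "3.IH" c(2) "3.prems"(2) Suc by simp
    moreover have "?a \<le> ?b" "?b \<le> plen ?p"
      using offset_mono[of k' "Suc k'" "y # ys"] offset_mono[of "Suc k'" "length (y # ys)" "y # ys"]
        plen_pcomp_list[of "y # ys"] "3.prems"(2) Suc by simp_all
    moreover have "subpath ?p ?a ?b = subpath (pcomp x ?p) (plen x + ?a) (plen x + ?b)"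
      using subpath_subpath[of "plen x" "plen x + plen ?p" "pcomp x ?p" ?a ?b]
        pcomp_eq_subpaths(2)[OF c(1)] calculation(2,3) by simp
    ultimately show ?thesis using Suc by (simp add: offset_Cons_Suc)
  qed
qed simp

lemma pcomp_list_Cons: "xs \<noteq> [] \<Longrightarrow> pcomp_list (x # xs) = pcomp x (pcomp_list xs)"
  by (cases xs) simp_all

lemma pcomp_list_snoc: "xs \<noteq> [] \<Longrightarrow> pcomp_list (xs @ [y]) = pcomp (pcomp_list xs) y"
  by (induction xs rule: pcomp_list.induct) (simp_all add: pcomp_assoc)

lemma chain_eq_subpaths:
  assumes us: "chain us" and p: "pcomp_list us = subpath P lo hi" and "lo \<le> hi" "hi \<le> plen P"
  shows "\<exists>b. b 0 = lo \<and> b (length us) = hi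
    \<and> (\<forall>k<length us. b k \<le> b (Suc k) \<and> us ! k = subpath P (b k) (b (Suc k)))"
proof -
  have "us \<noteq> []" using us by (simp add: chain_def)
  then have tot: "offset us (length us) = hi - lo"
    using plen_pcomp_list[of us] p assms(3,4) by simp
  have "offset us k \<le> offset us (Suc k)" "offset us (Suc k) \<le> hi - lo" if "k < length us" for k
    using offset_mono[of k "Suc k" us] offset_mono[of "Suc k" "length us" us] that tot by simp_all
  then have "us ! k = subpath P (lo + offset us k) (lo + offset us (Suc k))"
    if "k < length us" for k
    using chain_nth_eq_subpath[OF us that] subpath_subpath[OF assms(3,4)] that p by simp
  then show ?thesis
    using tot offset_mono[of _ "Suc _" us] assms(3)
    by (intro exI[of _ "\<lambda>k. lo + offset us k"]) simp
qed

definition left_pieces :: "('a, 'b) qpath \<Rightarrow> (nat \<Rightarrow> nat) \<Rightarrow> nat \<Rightarrow> ('a, 'b) qpath list" where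
  "left_pieces P c m = subpath P (c 0) (c 0) # map (\<lambda>k. subpath P (c k) (c (Suc k))) [0..<m]"

definition right_pieces :: "('a, 'b) qpath \<Rightarrow> (nat \<Rightarrow> nat) \<Rightarrow> nat \<Rightarrow> ('a, 'b) qpath list" where
  "right_pieces P d m = subpath P (d 0) (d 0) # map (\<lambda>k. subpath P (d (Suc k)) (d k)) [0..<m]"

(* For k = 0 the truncated k - 1 yields the trivial piece at c 0. *)
lemma left_pieces_simps:
  "length (left_pieces P c m) = Suc m"
  "k \<le> m \<Longrightarrow> left_pieces P c m ! k = subpath P (c (k - 1)) (c k)"
  "j \<le> m \<Longrightarrow> take (Suc j) (left_pieces P c m) = left_pieces P c j"
  by (auto simp: left_pieces_def nth_Cons' take_map min_def)

lemma right_pieces_simps: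
  "length (right_pieces P d m) = Suc m"
  "k \<le> m \<Longrightarrow> right_pieces P d m ! k = subpath P (d k) (d (k - 1))"
  "j \<le> m \<Longrightarrow> take (Suc j) (right_pieces P d m) = right_pieces P d j"
  by (auto simp: right_pieces_def nth_Cons' take_map min_def)

lemma left_pieces_cong: "(\<And>k. k \<le> m \<Longrightarrow> c k = c' k) \<Longrightarrow> left_pieces P c m = left_pieces P c' m"
  by (simp add: left_pieces_def)

lemma right_pieces_cong: "(\<And>k. k \<le> m \<Longrightarrow> d k = d' k) \<Longrightarrow> right_pieces P d m = right_pieces P d' m"
  by (simp add: right_pieces_def)

lemma pcomp_list_left_pieces:
  assumes "\<And>k. k < m \<Longrightarrow> c k \<le> c (Suc k)" "c m \<le> plen P"
  shows "pcomp_list (left_pieces P c m) = subpath P (c 0) (c m)"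
  using assms
proof (induction m)
  case (Suc m)
  have "c 0 \<le> c m" "c m \<le> c (Suc m)"
    using lift_Suc_mono_le_upto[of "Suc m" c 0 m] Suc.prems(1) by simp_all
  moreover have "c m \<le> plen P" using calculation(2) Suc.prems(2) by linarith
  ultimately have "pcomp_list (left_pieces P c m) = subpath P (c 0) (c m)"
    using Suc by simp
  then show ?case
    using pcomp_list_snoc[of "left_pieces P c m"] pcomp_subpath[of "c 0" "c m" "c (Suc m)" P]
      \<open>c 0 \<le> c m\<close> \<open>c m \<le> c (Suc m)\<close> Suc.prems(2)
    by (simp add: left_pieces_def)
qed (simp add: left_pieces_def)

lemma pcomp_list_rev_right_pieces:
  assumes "\<And>k. k < m \<Longrightarrow> d (Suc k) \<le> d k" "d 0 \<le> plen P"
  shows "pcomp_list (rev (right_pieces P d m)) = subpath P (d m) (d 0)"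
  using assms
proof (induction m)
  case (Suc m)
  have "d (Suc m) \<le> d m" "d m \<le> d 0"
    using lift_Suc_antimono_le_upto[of "Suc m" d 0 m] Suc.prems(1) by simp_all
  moreover have "pcomp_list (rev (right_pieces P d m)) = subpath P (d m) (d 0)"
    using Suc by simp
  ultimately show ?case
    using pcomp_list_Cons[of "rev (right_pieces P d m)"] pcomp_subpath[of "d (Suc m)" "d m" "d 0" P]
      Suc.prems(2)
    by (simp add: right_pieces_def)
qed (simp add: right_pieces_def)

lemma chain_left_pieces:
  assumes P: "is_path P" and c: "\<And>k. k < m \<Longrightarrow> c k \<le> c (Suc k)" "c m \<le> plen P"
  shows "chain (left_pieces P c m)"
proof -
  have b: "c (k - 1) \<le> c k" "c k \<le> plen P" if "k \<le> m" for k
  proof -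
    show "c (k - 1) \<le> c k" using lift_Suc_mono_le_upto[of m c "k - 1" k] c(1) that by simp
    show "c k \<le> plen P" using lift_Suc_mono_le_upto[of m c k m] c that by simp
  qed
  show ?thesis
    unfolding chain_def
  proof (intro conjI allI impI ballI)
    fix u assume "u \<in> set (left_pieces P c m)"
    then obtain k where "k < Suc m" "u = left_pieces P c m ! k"
      by (auto simp: in_set_conv_nth left_pieces_simps(1))
    then have "k \<le> m" "u = subpath P (c (k - 1)) (c k)" by (simp_all add: left_pieces_simps)
    then show "is_path u" using is_path_subpath[OF P] b by simp
  next
    fix i assume "Suc i < length (left_pieces P c m)"
    then show "ptgt (left_pieces P c m ! Suc i) = psrc (left_pieces P c m ! i)"
      using b[of "Suc i"] by (simp add: left_pieces_simps)
  qed (simp add: left_pieces_def)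
qed

lemma chain_rev_right_pieces:
  assumes P: "is_path P" and d: "\<And>k. k < m \<Longrightarrow> d (Suc k) \<le> d k" "d 0 \<le> plen P"
  shows "chain (rev (right_pieces P d m))"
proof -
  have b: "d k \<le> d (k - 1)" "d (k - 1) \<le> plen P" if "k \<le> m" for k
  proof -
    show "d k \<le> d (k - 1)" using lift_Suc_antimono_le_upto[of m d "k - 1" k] d(1) that by simp
    have "k - 1 \<le> m" using that by simp
    then show "d (k - 1) \<le> plen P" using lift_Suc_antimono_le_upto[of m d 0 "k - 1"] d by simp
  qed
  show ?thesis
    unfolding chain_def
  proof (intro conjI allI impI ballI)
    fix u assume "u \<in> set (rev (right_pieces P d m))"
    then obtain k where "k < Suc m" "u = right_pieces P d m ! k"
      by (auto simp: in_set_conv_nth right_pieces_simps(1))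
    then have "k \<le> m" "u = subpath P (d k) (d (k - 1))" by (simp_all add: right_pieces_simps)
    then show "is_path u" using is_path_subpath[OF P] b by simp
  next
    fix i assume "Suc i < length (rev (right_pieces P d m))"
    then show "ptgt (rev (right_pieces P d m) ! Suc i) = psrc (rev (right_pieces P d m) ! i)"
      using b[of "m - i"] b[of "m - Suc i"] by (simp add: rev_nth right_pieces_simps Suc_diff_Suc)
  qed (simp add: right_pieces_def)
qed

lemma left_decomp_left_pieces_iff:
  assumes P: "is_path P" and n: "-1 \<le> n" and m: "m = nat (n + 1)"
    and c: "\<And>k. k < m \<Longrightarrow> c k \<le> c (Suc k)" "c m \<le> plen P"
  shows "left_decomp n (subpath P (c 0) (c m)) (left_pieces P c m)
    \<longleftrightarrow> left_chain (subpath_inI P) m (c 0) (c m) c"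
proof -
  let ?us = "left_pieces P c m"
  have b: "c k \<le> c l" "c l \<le> plen P" if "k \<le> l" "l \<le> m" for k l
    using lift_Suc_mono_le_upto[of m c k l] lift_Suc_mono_le_upto[of m c l m] c that by simp_all
  have us: "?us ! 0 = subpath P (c 0) (c 0)"
    "k < m \<Longrightarrow> ?us ! Suc k = subpath P (c k) (c (Suc k))" for k
    by (simp_all add: left_pieces_simps)
  have len: "length ?us = nat (n + 2)" using n m by (simp add: left_pieces_simps)
  have u0: "fst (?us ! 0) = []" "snd (?us ! 0) \<in> Q0"
    using us(1) vertex_at_in_Q0[OF P] by (simp_all add: subpath_def)
  have arrow: "(0 \<le> n \<longrightarrow> plen (?us ! 1) = 1) \<longleftrightarrow> (0 < m \<longrightarrow> c 1 = Suc (c 0))"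
    using us(2)[of 0] b[of 0 1] m n by auto
  have "plen (?us ! 0) = 0" "is_path (?us ! 0)"
    using us(1) is_path_subpath[OF P] b[of 0 0] by simp_all
  then have "inB (?us ! 0)" using inI_plen_ge_2[of "?us ! 0"] unfolding inB_def by auto
  moreover have "inB (?us ! Suc k) \<longleftrightarrow> \<not> subpath_inI P (c k) (c (Suc k))" if "k < m" for k
    using us(2)[OF that] b[of k "Suc k"] that is_path_subpath[OF P]
    by (simp add: inB_def subpath_inI_def)
  ultimately have pieces: "(\<forall>u\<in>set ?us. inB u) \<longleftrightarrow> (\<forall>k<m. \<not> subpath_inI P (c k) (c (Suc k)))"
    unfolding all_set_conv_all_nth left_pieces_simps(1) All_less_Suc2 by simp
  have "pcomp (?us ! Suc k) (?us ! (Suc k + 1)) = subpath P (c k) (c (Suc (Suc k)))"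
    "c k \<le> c (Suc (Suc k))" "c (Suc (Suc k)) \<le> plen P"
    if "Suc (Suc k) \<le> m" for k
    using us(2)[of k] us(2)[of "Suc k"] pcomp_subpath[of "c k" "c (Suc k)"] b[of k "Suc k"]
      b[of "Suc k" "Suc (Suc k)"] that
    by simp_all
  then have pairs: "(\<forall>j. 1 \<le> j \<and> j + 1 < length ?us \<longrightarrow> inI (pcomp (?us ! j) (?us ! (j + 1)))
      \<and> (\<forall>q. is_suffix q (pcomp (?us ! j) (?us ! (j + 1))) \<and> q \<noteq> pcomp (?us ! j) (?us ! (j + 1))
             \<longrightarrow> \<not> inI q))
    \<longleftrightarrow> (\<forall>k. Suc (Suc k) \<le> m \<longrightarrow> subpath_inI P (c k) (c (Suc (Suc k)))
      \<and> (\<forall>x. c k \<le> x \<and> x < c (Suc (Suc k)) \<longrightarrow> \<not> subpath_inI P (c k) x))"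
    unfolding left_pieces_simps(1) all_interior_Suc_conv
    using proper_suffixes_notin_I_iff[OF P] by (simp add: subpath_inI_def)
  show ?thesis
    unfolding left_decomp_def left_chain_def
    using n len u0 c arrow pieces pairs chain_left_pieces[OF P c] pcomp_list_left_pieces[OF c]
    by simp
qed

lemma right_decomp_right_pieces_iff:
  assumes P: "is_path P" and n: "-1 \<le> n" and m: "m = nat (n + 1)"
    and d: "\<And>k. k < m \<Longrightarrow> d (Suc k) \<le> d k" "d 0 \<le> plen P"
  shows "right_decomp n (subpath P (d m) (d 0)) (right_pieces P d m)
    \<longleftrightarrow> right_chain (subpath_inI P) m (d m) (d 0) d"
proof -
  let ?vs = "right_pieces P d m"
  have b: "d l \<le> d k" "d k \<le> plen P" if "k \<le> l" "l \<le> m" for k l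
    using lift_Suc_antimono_le_upto[of m d k l] lift_Suc_antimono_le_upto[of m d 0 k] d that
    by simp_all
  have vs: "?vs ! 0 = subpath P (d 0) (d 0)"
    "k < m \<Longrightarrow> ?vs ! Suc k = subpath P (d (Suc k)) (d k)" for k
    by (simp_all add: right_pieces_simps)
  have len: "length ?vs = nat (n + 2)" using n m by (simp add: right_pieces_simps)
  have v0: "fst (?vs ! 0) = []" "snd (?vs ! 0) \<in> Q0"
    using vs(1) vertex_at_in_Q0[OF P] by (simp_all add: subpath_def)
  have arrow: "(0 \<le> n \<longrightarrow> plen (?vs ! 1) = 1) \<longleftrightarrow> (0 < m \<longrightarrow> Suc (d 1) = d 0)"
    using vs(2)[of 0] b[of 0 1] m n by auto
  have "plen (?vs ! 0) = 0" "is_path (?vs ! 0)"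
    using vs(1) is_path_subpath[OF P] b[of 0 0] by simp_all
  then have "inB (?vs ! 0)" using inI_plen_ge_2[of "?vs ! 0"] unfolding inB_def by auto
  moreover have "inB (?vs ! Suc k) \<longleftrightarrow> \<not> subpath_inI P (d (Suc k)) (d k)" if "k < m" for k
    using vs(2)[OF that] b[of k "Suc k"] that is_path_subpath[OF P]
    by (simp add: inB_def subpath_inI_def)
  ultimately have pieces: "(\<forall>v\<in>set ?vs. inB v) \<longleftrightarrow> (\<forall>k<m. \<not> subpath_inI P (d (Suc k)) (d k))"
    unfolding all_set_conv_all_nth right_pieces_simps(1) All_less_Suc2 by simp
  have "pcomp (?vs ! (Suc k + 1)) (?vs ! Suc k) = subpath P (d (Suc (Suc k))) (d k)"
    "d (Suc (Suc k)) \<le> d k" "d k \<le> plen P"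
    if "Suc (Suc k) \<le> m" for k
    using vs(2)[of k] vs(2)[of "Suc k"] pcomp_subpath[of "d (Suc (Suc k))" "d (Suc k)" "d k"]
      b[of k "Suc k"] b[of "Suc k" "Suc (Suc k)"] that
    by simp_all
  then have pairs: "(\<forall>j. 1 \<le> j \<and> j + 1 < length ?vs \<longrightarrow> inI (pcomp (?vs ! (j + 1)) (?vs ! j))
      \<and> (\<forall>q. is_prefix q (pcomp (?vs ! (j + 1)) (?vs ! j)) \<and> q \<noteq> pcomp (?vs ! (j + 1)) (?vs ! j)
             \<longrightarrow> \<not> inI q))
    \<longleftrightarrow> (\<forall>k. Suc (Suc k) \<le> m \<longrightarrow> subpath_inI P (d (Suc (Suc k))) (d k)
      \<and> (\<forall>x. d (Suc (Suc k)) < x \<and> x \<le> d k \<longrightarrow> \<not> subpath_inI P x (d k)))"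
    unfolding right_pieces_simps(1) all_interior_Suc_conv
    using proper_prefixes_notin_I_iff[OF P] by (simp add: subpath_inI_def)
  show ?thesis
    unfolding right_decomp_def right_chain_def
    using n len v0 d arrow pieces pairs chain_rev_right_pieces[OF P d]
      pcomp_list_rev_right_pieces[OF d]
    by simp
qed

lemma left_decomp_subpath_iff:
  assumes P: "is_path P" and lh: "lo \<le> hi" "hi \<le> plen P" and n: "-1 \<le> n"
  shows "left_decomp n (subpath P lo hi) us
    \<longleftrightarrow> (\<exists>c. left_chain (subpath_inI P) (nat (n + 1)) lo hi c \<and> us = left_pieces P c (nat (n + 1)))"
proof
  let ?m = "nat (n + 1)"
  assume "left_decomp n (subpath P lo hi) us"
  then have us: "chain us" "pcomp_list us = subpath P lo hi" "length us = Suc ?m"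
    "fst (us ! 0) = []"
    using n by (auto simp: left_decomp_def)
  then obtain b where b: "b 0 = lo" "b (Suc ?m) = hi"
    "\<And>k. k < Suc ?m \<Longrightarrow> b k \<le> b (Suc k) \<and> us ! k = subpath P (b k) (b (Suc k))"
    using chain_eq_subpaths[OF us(1,2) lh] by auto
  have "b 1 \<le> plen P"
    using lift_Suc_mono_le_upto[of "Suc ?m" b 1 "Suc ?m"] b lh by simp
  moreover have "plen (us ! 0) = 0" using us(4) by (simp add: plen_def)
  ultimately have "b 1 = b 0" using b(3)[of 0] by simp
  define c where "c k = b (Suc k)" for k
  have "us = left_pieces P c ?m"
  proof (rule nth_equalityI)
    fix k assume "k < length us"
    then show "us ! k = left_pieces P c ?m ! k"
      using b(3) \<open>b 1 = b 0\<close> us(3) by (cases k) (simp_all add: c_def left_pieces_simps)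
  qed (simp add: us(3) left_pieces_simps)
  moreover have "c 0 = lo" "c ?m = hi" "\<And>k. k < ?m \<Longrightarrow> c k \<le> c (Suc k)"
    using b \<open>b 1 = b 0\<close> by (simp_all add: c_def)
  ultimately show "\<exists>c. left_chain (subpath_inI P) ?m lo hi c \<and> us = left_pieces P c ?m"
    using left_decomp_left_pieces_iff[OF P n refl, of c] \<open>left_decomp n (subpath P lo hi) us\<close> lh
    by auto
next
  assume "\<exists>c. left_chain (subpath_inI P) (nat (n + 1)) lo hi c \<and> us = left_pieces P c (nat (n + 1))"
  then obtain c where c: "left_chain (subpath_inI P) (nat (n + 1)) lo hi c"
    and "us = left_pieces P c (nat (n + 1))"
    by blast
  moreover have "left_decomp n (subpath P (c 0) (c (nat (n + 1)))) (left_pieces P c (nat (n + 1)))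
    \<longleftrightarrow> left_chain (subpath_inI P) (nat (n + 1)) (c 0) (c (nat (n + 1))) c"
    by (rule left_decomp_left_pieces_iff[OF P n refl]) (use left_chainD[OF c] lh in simp_all)
  ultimately show "left_decomp n (subpath P lo hi) us" using left_chainD[OF c] by simp
qed

lemma right_decomp_subpath_iff:
  assumes P: "is_path P" and lh: "lo \<le> hi" "hi \<le> plen P" and n: "-1 \<le> n"
  shows "right_decomp n (subpath P lo hi) vs
    \<longleftrightarrow> (\<exists>d. right_chain (subpath_inI P) (nat (n + 1)) lo hi d \<and> vs = right_pieces P d (nat (n + 1)))"
proof
  let ?m = "nat (n + 1)"
  assume rd: "right_decomp n (subpath P lo hi) vs"
  then have vs: "chain (rev vs)" "pcomp_list (rev vs) = subpath P lo hi" "length vs = Suc ?m"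
    "fst (vs ! 0) = []"
    using n by (auto simp: right_decomp_def)
  then obtain b where b: "b 0 = lo" "b (Suc ?m) = hi"
    "\<And>k. k < Suc ?m \<Longrightarrow> b k \<le> b (Suc k) \<and> rev vs ! k = subpath P (b k) (b (Suc k))"
    using chain_eq_subpaths[OF vs(1,2) lh] by auto
  have vs_nth: "vs ! k = subpath P (b (?m - k)) (b (Suc (?m - k)))" if "k \<le> ?m" for k
    using b(3)[of "?m - k"] vs(3) that by (simp add: rev_nth)
  have "plen (vs ! 0) = 0" using vs(4) by (simp add: plen_def)
  then have "b ?m = b (Suc ?m)" using vs_nth[of 0] b(2) b(3)[of ?m] lh by simp
  define d where "d k = b (?m - k)" for k
  have "vs = right_pieces P d ?m"
  proof (rule nth_equalityI)
    fix k assume "k < length vs"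
    then show "vs ! k = right_pieces P d ?m ! k"
      using vs_nth[of k] \<open>b ?m = b (Suc ?m)\<close> vs(3)
      by (cases k) (simp_all add: d_def right_pieces_simps Suc_diff_Suc)
  qed (simp add: vs(3) right_pieces_simps)
  moreover have "d (Suc k) \<le> d k" if "k < ?m" for k
    using b(3)[of "?m - Suc k"] that by (simp add: d_def Suc_diff_Suc)
  moreover have "d 0 = hi" "d ?m = lo" using b \<open>b ?m = b (Suc ?m)\<close> by (simp_all add: d_def)
  ultimately show "\<exists>d. right_chain (subpath_inI P) ?m lo hi d \<and> vs = right_pieces P d ?m"
    using right_decomp_right_pieces_iff[OF P n refl, of d] rd lh by auto
next
  assume "\<exists>d. right_chain (subpath_inI P) (nat (n + 1)) lo hi d
    \<and> vs = right_pieces P d (nat (n + 1))"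
  then obtain d where d: "right_chain (subpath_inI P) (nat (n + 1)) lo hi d"
    and "vs = right_pieces P d (nat (n + 1))"
    by blast
  moreover have "right_decomp n (subpath P (d (nat (n + 1))) (d 0)) (right_pieces P d (nat (n + 1)))
    \<longleftrightarrow> right_chain (subpath_inI P) (nat (n + 1)) (d (nat (n + 1))) (d 0) d"
    by (rule right_decomp_right_pieces_iff[OF P n refl]) (use right_chainD[OF d] lh in simp_all)
  ultimately show "right_decomp n (subpath P lo hi) vs" using right_chainD[OF d] by simp
qed

lemma Gamma_subpath_iff:
  assumes P: "is_path P" and lh: "lo \<le> hi" "hi \<le> plen P" and n: "-1 \<le> n"
  shows Gamma_subpath_iff_left_chain:
      "subpath P lo hi \<in> Gamma n \<longleftrightarrow> (\<exists>c. left_chain (subpath_inI P) (nat (n + 1)) lo hi c)"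
    and Gamma_subpath_iff_right_chain:
      "subpath P lo hi \<in> Gamma n \<longleftrightarrow> (\<exists>d. right_chain (subpath_inI P) (nat (n + 1)) lo hi d)"
proof -
  have J: "segment_ideal (subpath_inI P) lo hi" using segment_ideal_subpath_inI[OF P lh(2)] .
  have "subpath P lo hi \<in> Gamma n \<longleftrightarrow>
    (\<exists>c. left_chain (subpath_inI P) (nat (n + 1)) lo hi c)
    \<and> (\<exists>d. right_chain (subpath_inI P) (nat (n + 1)) lo hi d)"
    unfolding Gamma_def left_amb_def right_amb_def
    using left_decomp_subpath_iff[OF assms] right_decomp_subpath_iff[OF assms] by auto
  then show "subpath P lo hi \<in> Gamma n \<longleftrightarrow> (\<exists>c. left_chain (subpath_inI P) (nat (n + 1)) lo hi c)"
    and "subpath P lo hi \<in> Gamma n \<longleftrightarrow> (\<exists>d. right_chain (subpath_inI P) (nat (n + 1)) lo hi d)"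
    using right_chain_greedy[OF J] left_chain_exists[OF J] by blast+
qed

lemma sigma_subpath:
  assumes P: "is_path P" and lh: "lo \<le> hi" "hi \<le> plen P" and k: "-1 \<le> k" "k \<le> n"
    and c: "left_chain (subpath_inI P) (nat (n + 1)) lo hi c"
  shows "sigma n k (subpath P lo hi) = subpath P lo (c (nat (k + 1)))"
proof -
  have n: "-1 \<le> n" using k by simp
  have "(THE us. left_decomp n (subpath P lo hi) us) = left_pieces P c (nat (n + 1))"
  proof (rule the_equality)
    show "left_decomp n (subpath P lo hi) (left_pieces P c (nat (n + 1)))"
      using left_decomp_subpath_iff[OF P lh n] c by blast
  next
    fix us assume "left_decomp n (subpath P lo hi) us"
    then obtain c' where "left_chain (subpath_inI P) (nat (n + 1)) lo hi c'"
      "us = left_pieces P c' (nat (n + 1))"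
      using left_decomp_subpath_iff[OF P lh n] by blast
    then show "us = left_pieces P c (nat (n + 1))"
      using left_chain_unique[OF _ c] left_pieces_cong by metis
  qed
  moreover have "nat (k + 2) = Suc (nat (k + 1))" "nat (k + 1) \<le> nat (n + 1)" using k by simp_all
  ultimately have "sigma n k (subpath P lo hi) = pcomp_list (left_pieces P c (nat (k + 1)))"
    by (simp add: sigma_def left_pieces_simps)
  also have "\<dots> = subpath P lo (c (nat (k + 1)))"
    using pcomp_list_left_pieces[of "nat (k + 1)" c P] left_chain_le_Suc[OF c] left_chainD(1)[OF c]
      left_chain_bounds(2)[OF c \<open>nat (k + 1) \<le> nat (n + 1)\<close>] \<open>nat (k + 1) \<le> nat (n + 1)\<close> lh
    by simp
  finally show ?thesis .
qed

lemma pi_subpath: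
  assumes P: "is_path P" and lh: "lo \<le> hi" "hi \<le> plen P" and k: "-1 \<le> k" "k \<le> n"
    and d: "right_chain (subpath_inI P) (nat (n + 1)) lo hi d"
  shows "pi n k (subpath P lo hi) = subpath P (d (nat (k + 1))) hi"
proof -
  have n: "-1 \<le> n" using k by simp
  have "(THE vs. right_decomp n (subpath P lo hi) vs) = right_pieces P d (nat (n + 1))"
  proof (rule the_equality)
    show "right_decomp n (subpath P lo hi) (right_pieces P d (nat (n + 1)))"
      using right_decomp_subpath_iff[OF P lh n] d by blast
  next
    fix vs assume "right_decomp n (subpath P lo hi) vs"
    then obtain d' where "right_chain (subpath_inI P) (nat (n + 1)) lo hi d'"
      "vs = right_pieces P d' (nat (n + 1))"
      using right_decomp_subpath_iff[OF P lh n] by blast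
    then show "vs = right_pieces P d (nat (n + 1))"
      using right_chain_unique[OF _ d] right_pieces_cong by metis
  qed
  moreover have "nat (k + 2) = Suc (nat (k + 1))" "nat (k + 1) \<le> nat (n + 1)" using k by simp_all
  ultimately have "pi n k (subpath P lo hi) = pcomp_list (rev (right_pieces P d (nat (k + 1))))"
    by (simp add: pi_def right_pieces_simps)
  also have "\<dots> = subpath P (d (nat (k + 1))) hi"
    using pcomp_list_rev_right_pieces[of "nat (k + 1)" d P] right_chain_Suc_le[OF d]
      right_chainD[OF d] \<open>nat (k + 1) \<le> nat (n + 1)\<close> lh
    by simp
  finally show ?thesis .
qed

lemma Gamma_is_path: "p \<in> Gamma n \<Longrightarrow> is_path p"
  using is_path_pcomp_list by (auto simp: Gamma_def left_amb_def left_decomp_def)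

lemma occ_subpath_subpath:
  assumes w: "is_path w" and "i \<le> k" "k \<le> l" "l \<le> j" "j \<le> plen w"
  shows "occ (subpath w i j) (subpath w k l) (subpath w i k) (subpath w l j)"
proof -
  let ?X = "subpath w i j"
  have "is_path ?X" using is_path_subpath[OF w] assms by simp
  moreover have "subpath w i k = subpath ?X 0 (k - i)" "subpath w k l = subpath ?X (k - i) (l - i)"
    "subpath w l j = subpath ?X (l - i) (plen ?X)" "k - i \<le> l - i" "l - i \<le> plen ?X"
    using assms by (simp_all add: subpath_subpath)
  ultimately show ?thesis using occ_iff_subpaths by blast
qed

lemma sigma_extension:
  assumes w: "is_path w" and n: "-1 \<le> n" "odd n"
    and q1: "subpath w 0 m1 \<in> Gamma n" and q2: "subpath w m2 (plen w) \<in> Gamma n"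
    and "0 < m2" "m2 \<le> plen w" "m1 < plen w" and a: "\<not> subpath_inI w m1 (plen w)"
  shows "\<exists>p1 x1 y1 x c. p1 \<in> Gamma (n + 1) \<and> occ w p1 x1 y1 \<and> occ p1 (sigma (n + 1) n p1) x c
    \<and> sigma (n + 1) n p1 = subpath w 0 m1 \<and> pcomp x1 x = triv (ptgt w)
    \<and> pcomp c y1 = subpath w m1 (plen w)"
proof -
  let ?J = "subpath_inI w" and ?m = "nat (n + 1)"
  have m: "even ?m" "nat (n + 1 + 1) = Suc ?m" using n by (simp_all add: even_nat_iff)
  obtain c1 where c1: "left_chain ?J ?m 0 m1 c1"
    using q1 Gamma_subpath_iff_left_chain[OF w _ _ n(1)] \<open>m1 < plen w\<close> by auto
  obtain c2 where c2: "left_chain ?J ?m m2 (plen w) c2"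
    using q2 Gamma_subpath_iff_left_chain[OF w _ _ n(1)] \<open>m2 \<le> plen w\<close> by auto
  obtain e c where c: "left_chain ?J (Suc ?m) 0 e c" "\<forall>k\<le>?m. c k = c1 k"
    and e: "m1 < e" "e \<le> plen w"
    using left_chain_extend[OF segment_ideal_subpath_inI[OF w order_refl] c1 c2 m(1)] assms(6,8) a
    by blast
  have G: "subpath w 0 e \<in> Gamma (n + 1)"
    using Gamma_subpath_iff_left_chain[OF w _ e(2)] c(1) m(2) n by auto
  have sigma: "sigma (n + 1) n (subpath w 0 e) = subpath w 0 m1"
    using sigma_subpath[OF w _ e(2), where k = n and n = "n + 1" and c = c] c m(2) n
      left_chainD(2)[OF c1]
    by simp
  show ?thesis
  proof (intro exI conjI)
    show "occ w (subpath w 0 e) (subpath w 0 0) (subpath w e (plen w))"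
      "occ (subpath w 0 e) (sigma (n + 1) n (subpath w 0 e)) (subpath w 0 0) (subpath w m1 e)"
      using occ_subpath_subpath[OF w, of 0 0 e "plen w"] occ_subpath_subpath[OF w, of 0 0 m1 e]
        sigma e
      by simp_all
    show "pcomp (subpath w 0 0) (subpath w 0 0) = triv (ptgt w)"
      "pcomp (subpath w m1 e) (subpath w e (plen w)) = subpath w m1 (plen w)"
      using pcomp_subpath[of _ _ _ w] triv_eq_subpath(1)[of w] e by simp_all
  qed (use G sigma in simp_all)
qed

lemma pi_extension:
  assumes w: "is_path w" and n: "-1 \<le> n" "odd n"
    and q1: "subpath w 0 m1 \<in> Gamma n" and q2: "subpath w m2 (plen w) \<in> Gamma n"
    and "0 < m2" "m2 \<le> plen w" "m1 < plen w" and b: "\<not> subpath_inI w 0 m2"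
  shows "\<exists>p2 x2 y2 x c. p2 \<in> Gamma (n + 1) \<and> occ w p2 x2 y2 \<and> occ p2 (pi (n + 1) n p2) x c
    \<and> pi (n + 1) n p2 = subpath w m2 (plen w) \<and> pcomp x2 x = subpath w 0 m2
    \<and> pcomp c y2 = triv (psrc w)"
proof -
  let ?J = "subpath_inI w" and ?m = "nat (n + 1)"
  have m: "even ?m" "nat (n + 1 + 1) = Suc ?m" using n by (simp_all add: even_nat_iff)
  obtain d1 where d1: "right_chain ?J ?m 0 m1 d1"
    using q1 Gamma_subpath_iff_right_chain[OF w _ _ n(1)] \<open>m1 < plen w\<close> by auto
  obtain d2 where d2: "right_chain ?J ?m m2 (plen w) d2"
    using q2 Gamma_subpath_iff_right_chain[OF w _ _ n(1)] \<open>m2 \<le> plen w\<close> by auto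
  obtain s d where d: "right_chain ?J (Suc ?m) s (plen w) d" "\<forall>k\<le>?m. d k = d2 k" and s: "s < m2"
    using right_chain_extend[OF segment_ideal_subpath_inI[OF w order_refl] d1 d2 m(1)] assms(6,8) b
    by blast
  have G: "subpath w s (plen w) \<in> Gamma (n + 1)"
    using Gamma_subpath_iff_right_chain[OF w _ order_refl] d(1) m(2) n s \<open>m2 \<le> plen w\<close> by auto
  have pi: "pi (n + 1) n (subpath w s (plen w)) = subpath w m2 (plen w)"
    using pi_subpath[OF w _ order_refl, where lo = s and k = n and n = "n + 1" and d = d] d m(2) n s
      \<open>m2 \<le> plen w\<close> right_chainD(2)[OF d2]
    by simp
  show ?thesis
  proof (intro exI conjI)
    show "occ w (subpath w s (plen w)) (subpath w 0 s) (subpath w (plen w) (plen w))"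
      "occ (subpath w s (plen w)) (pi (n + 1) n (subpath w s (plen w))) (subpath w s m2)
        (subpath w (plen w) (plen w))"
      using occ_subpath_subpath[OF w, of 0 s "plen w" "plen w"]
        occ_subpath_subpath[OF w, of s m2 "plen w" "plen w"] pi s \<open>m2 \<le> plen w\<close>
      by simp_all
    show "pcomp (subpath w 0 s) (subpath w s m2) = subpath w 0 m2"
      "pcomp (subpath w (plen w) (plen w)) (subpath w (plen w) (plen w)) = triv (psrc w)"
      using pcomp_subpath[of _ _ _ w] triv_eq_subpath(2)[of w] s \<open>m2 \<le> plen w\<close> by simp_all
  qed (use G pi in simp_all)
qed

end

theorem mainTheorem3:
  fixes Q0 :: "'v set" and Q1 :: "'e set" and s t :: "'e \<Rightarrow> 'v"
    and R :: "('v,'e) qpath set"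
    and n :: int and q1 q2 a b w :: "('v,'e) qpath"
  assumes fm: "finite_monomial Q0 Q1 s t R"
    and n: "n \<ge> -1" "odd n"
    and q1: "q1 \<in> quiver_monomial.Gamma Q0 Q1 s t R n"
    and q2: "q2 \<in> quiver_monomial.Gamma Q0 Q1 s t R n"
    and a: "quiver_monomial.is_path Q0 Q1 s t a" "plen a > 0"
    and b: "quiver_monomial.is_path Q0 Q1 s t b" "plen b > 0"
    and comp1: "quiver_monomial.ptgt t a = psrc q1"
    and comp2: "quiver_monomial.ptgt t q2 = psrc b"
    and w1: "w = pcomp q1 a"
    and w2: "w = pcomp b q2"
    and aB: "\<not> quiver_monomial.inI Q0 Q1 s t R a"
    and bB: "\<not> quiver_monomial.inI Q0 Q1 s t R b"
  shows "(\<exists>p1 x1 y1 x c.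
            p1 \<in> quiver_monomial.Gamma Q0 Q1 s t R (n + 1)
          \<and> quiver_monomial.occ Q0 Q1 s t w p1 x1 y1
          \<and> quiver_monomial.occ Q0 Q1 s t p1 (quiver_monomial.sigma Q0 Q1 s t R (n + 1) n p1) x c
          \<and> quiver_monomial.sigma Q0 Q1 s t R (n + 1) n p1 = q1
          \<and> pcomp x1 x = triv (quiver_monomial.ptgt t w)
          \<and> pcomp c y1 = a)
       \<and> (\<exists>p2 x2 y2 x c.
            p2 \<in> quiver_monomial.Gamma Q0 Q1 s t R (n + 1)
          \<and> quiver_monomial.occ Q0 Q1 s t w p2 x2 y2
          \<and> quiver_monomial.occ Q0 Q1 s t p2 (quiver_monomial.pi Q0 Q1 s t R (n + 1) n p2) x c
          \<and> quiver_monomial.pi Q0 Q1 s t R (n + 1) n p2 = q2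
          \<and> pcomp x2 x = b
          \<and> pcomp c y2 = triv (psrc w))"
proof -
  interpret monomial_quiver Q0 Q1 s t R
    using fm by unfold_locales (auto simp: finite_monomial_def)
  have w: "is_path w" using is_path_pcomp[OF b(1) Gamma_is_path[OF q2] comp2] w2 by simp
  define m1 m2 where "m1 = plen q1" and "m2 = plen b"
  have split: "q1 = subpath w 0 m1" "a = subpath w m1 (plen w)"
    "b = subpath w 0 m2" "q2 = subpath w m2 (plen w)"
    using pcomp_eq_subpaths[OF comp1, folded w1] pcomp_eq_subpaths[OF comp2, folded w2]
    unfolding m1_def m2_def by simp_all
  have len: "0 < m2" "m2 \<le> plen w" "m1 < plen w"
    using arg_cong[OF w1, of plen] arg_cong[OF w2, of plen] a(2) b(2) m1_def m2_def by simp_all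
  show ?thesis
    using sigma_extension[OF w n q1[unfolded split] q2[unfolded split] len]
      pi_extension[OF w n q1[unfolded split] q2[unfolded split] len] aB bB split
    by (simp add: subpath_inI_def)
qed

end
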